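(* Let $L$ be a normalised lattice in $\mathrm{Osc}_1$, $r=r(L)$, $q=\operatorname{ord}(\lambda(L))$. There exists $S\in\mathrm{SO}(2)$ (acting on $\mathbb C\cong\mathbb R^2$) such that $F_S(L)$, where $F_S(\xi,z,t)=(S\xi,z,t)$, is generated by elements $\alpha=(\tfrac1{\sqrt\nu},z_\alpha,0)$, $\beta=(-\tfrac{\mu}{\sqrt\nu}+i\sqrt\nu,z_\beta,0)$, $\gamma=(0,\tfrac1r,0)$ and some $\delta$, for suitable $z_\alpha,z_\beta\in\mathbb R$ and suitable $(\mu,\nu)\in\mathcal F$. If $q=4$ then $\mu+i\nu=i$, and if $q\in\{3,6\}$ then $\mu+i\nu=e^{\pi i/3}$. If moreover $\delta\in F_S(L)$ is chosen so that its projection to the $\mathbb R$-factor equals $\lambda(L)$, then $\alpha,\beta,\gamma,\delta$ are adapted generators of $F_S(L)$.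
   Context: $\mathrm{Osc}_1$ is the set $\mathbb C\times\mathbb R\times\mathbb R$ with multiplication $(\xi_1,z_1,t_1)(\xi_2,z_2,t_2)=(\xi_1+e^{it_1}\xi_2,\ z_1+z_2+\tfrac12\operatorname{Im}(\overline{\xi_1}e^{it_1}\xi_2),\ t_1+t_2)$; $H=\mathbb C\times\mathbb R\times\{0\}$, $Z(H)=\{0\}\times\mathbb R\times\{0\}$. For a lattice $L$: $L\cap H\cong H_1^r(\mathbb Z)=\langle\alpha,\beta,\gamma\mid\alpha\beta\alpha^{-1}\beta^{-1}=\gamma^r,\gamma\text{ central}\rangle$ for a unique $r=r(L)$; the projection of $L$ to the last factor is generated by a unique $\lambda(L)\in\pi\mathbb N_{>0}\cup\bigcup_{\lambda_0\in\{\pi/3,\pi/2,2\pi/3\}}(\lambda_0+2\pi\mathbb Z)$, and $\operatorname{ord}(\lambda)$ is the least $q\ge1$ with $q\lambda\in2\pi\mathbb Z$. $L$ is normalised if the projection of $L\cap H$ to $H/Z(H)\cong\mathbb C$ has covolume one. $\mathcal F=\{(\mu,\nu):\nu>0,\ \mu\in[0,\tfrac12],\ \mu^2+\nu^2\ge1\}\cup\{(\mu,\nu):\nu>0,\ \mu\in(-\tfrac12,0),\ \mu^2+\nu^2>1\}$, identified with $\mu+i\nu$. Generators $\alpha,\beta,\gamma,\delta$ of $L$ are adapted if: the $\mathbb R$-component of $\delta$ is $\lambda(L)$; $\alpha,\beta,\gamma$ generate $L\cap H$ with $\gamma$ central and $\alpha\beta\alpha^{-1}\beta^{-1}=\gamma^r$;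 the matrix of the automorphism induced by conjugation with $\delta$ on $(L\cap H)/Z(L\cap H)\cong\mathbb Z^2$ (basis: classes of $\alpha,\beta$) is one of $I_2,-I_2,\begin{pmatrix}0&-1\\1&-1\end{pmatrix},\begin{pmatrix}0&-1\\1&0\end{pmatrix},\begin{pmatrix}1&-1\\1&0\end{pmatrix}$; and the projections of $\alpha,\beta$ to $\mathbb C\cong\mathbb R^2$ form a positively oriented basis. *)

theory Defs
  imports "HOL-Analysis.Analysis"
begin

type_synonym osc = "complex \<times> real \<times> real"

definition osc_mult :: "osc \<Rightarrow> osc \<Rightarrow> osc" where
  "osc_mult g h = (case g of (\<xi>1, z1, t1) \<Rightarrow> case h of (\<xi>2, z2, t2) \<Rightarrow>
     (\<xi>1 + exp (\<i> * of_real t1) * \<xi>2,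
      z1 + z2 + Im (cnj \<xi>1 * (exp (\<i> * of_real t1) * \<xi>2)) / 2,
      t1 + t2))"

definition osc_one :: osc where "osc_one = (0, 0, 0)"

definition osc_inv :: "osc \<Rightarrow> osc" where
  "osc_inv g = (case g of (\<xi>, z, t) \<Rightarrow> (- (exp (- \<i> * of_real t) * \<xi>), - z, - t))"

definition osc_ipow :: "osc \<Rightarrow> int \<Rightarrow> osc" where
  "osc_ipow g k = (if 0 \<le> k then (osc_mult g ^^ nat k) osc_one
                   else (osc_mult (osc_inv g) ^^ nat (- k)) osc_one)"

definition osc_comm :: "osc \<Rightarrow> osc \<Rightarrow> osc" where
  "osc_comm a b = osc_mult (osc_mult (osc_mult a b) (osc_inv a)) (osc_inv b)"

definition osc_conj :: "osc \<Rightarrow> osc \<Rightarrow> osc" where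
  "osc_conj d a = osc_mult (osc_mult d a) (osc_inv d)"

definition Hset :: "osc set" where "Hset = {g. snd (snd g) = 0}"

definition osc_subgroup :: "osc set \<Rightarrow> bool" where
  "osc_subgroup L \<longleftrightarrow> osc_one \<in> L \<and> (\<forall>x\<in>L. \<forall>y\<in>L. osc_mult x y \<in> L) \<and> (\<forall>x\<in>L. osc_inv x \<in> L)"

inductive_set osc_gen :: "osc set \<Rightarrow> osc set" for A where
  gen_one: "osc_one \<in> osc_gen A"
| gen_base: "a \<in> A \<Longrightarrow> a \<in> osc_gen A"
| gen_mult: "x \<in> osc_gen A \<Longrightarrow> y \<in> osc_gen A \<Longrightarrow> osc_mult x y \<in> osc_gen A"
| gen_inv: "x \<in> osc_gen A \<Longrightarrow> osc_inv x \<in> osc_gen A"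

definition osc_center :: "osc set \<Rightarrow> osc set" where
  "osc_center G = {z \<in> G. \<forall>y\<in>G. osc_mult z y = osc_mult y z}"

definition osc_lattice :: "osc set \<Rightarrow> bool" where
  "osc_lattice L \<longleftrightarrow> osc_subgroup L
     \<and> (\<exists>U. open U \<and> osc_one \<in> U \<and> L \<inter> U = {osc_one})
     \<and> (\<exists>K. compact K \<and> (\<forall>g. \<exists>l\<in>L. \<exists>k\<in>K. g = osc_mult l k))"

text \<open>Concrete model of H_1^r(Z) = <a,b,c | aba^-1b^-1 = c^r, c central> on Z^3:
  a = (1,0,0), b = (0,1,0), c = (0,0,1).\<close>
definition heis_mult :: "nat \<Rightarrow> int \<times> int \<times> int \<Rightarrow> int \<times> int \<times> int \<Rightarrow> int \<times> int \<times> int" where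
  "heis_mult r x y = (case x of (a1, b1, c1) \<Rightarrow> case y of (a2, b2, c2) \<Rightarrow>
      (a1 + a2, b1 + b2, c1 + c2 + int r * a1 * b2))"

definition r_of :: "osc set \<Rightarrow> nat" where
  "r_of L = (THE r. 0 < r \<and> (\<exists>f. bij_betw f (L \<inter> Hset) UNIV \<and>
      (\<forall>x\<in>L \<inter> Hset. \<forall>y\<in>L \<inter> Hset. f (osc_mult x y) = heis_mult r (f x) (f y))))"

definition lambda_set :: "real set" where
  "lambda_set = {pi * real n | n. n > 0}
     \<union> (\<Union>l0\<in>{pi/3, pi/2, 2*pi/3}. {l0 + 2 * pi * of_int k | k. True})"

definition lambda_of :: "osc set \<Rightarrow> real" where
  "lambda_of L = (THE l. l \<in> lambda_set \<and> (\<lambda>g. snd (snd g)) ` L = {of_int k * l | k. True})"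

definition ord_lam :: "real \<Rightarrow> nat" where
  "ord_lam l = (LEAST q. 1 \<le> q \<and> (\<exists>k::int. real q * l = 2 * pi * of_int k))"

definition normalised :: "osc set \<Rightarrow> bool" where
  "normalised L \<longleftrightarrow> (\<exists>u v. fst ` (L \<inter> Hset) = {of_int a * u + of_int b * v | a b. True}
      \<and> \<bar>Im (cnj u * v)\<bar> = 1)"

definition Fdom :: "(real \<times> real) set" where
  "Fdom = {(\<mu>, \<nu>). \<nu> > 0 \<and> 0 \<le> \<mu> \<and> \<mu> \<le> 1/2 \<and> \<mu>^2 + \<nu>^2 \<ge> 1}
        \<union> {(\<mu>, \<nu>). \<nu> > 0 \<and> -1/2 < \<mu> \<and> \<mu> < 0 \<and> \<mu>^2 + \<nu>^2 > 1}"

definition SO2 :: "(real^2^2) set" where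
  "SO2 = {S. orthogonal_matrix S \<and> det S = 1}"

definition rot :: "real^2^2 \<Rightarrow> complex \<Rightarrow> complex" where
  "rot S \<xi> = (let v = S *v vector [Re \<xi>, Im \<xi>] in Complex (v $ 1) (v $ 2))"

definition F_S :: "real^2^2 \<Rightarrow> osc \<Rightarrow> osc" where
  "F_S S g = (case g of (\<xi>, z, t) \<Rightarrow> (rot S \<xi>, z, t))"

text \<open>Allowed matrices (m11, m12, m21, m22) = [[m11,m12],[m21,m22]]:
  I, -I, [[0,-1],[1,-1]], [[0,-1],[1,0]], [[1,-1],[1,0]].\<close>
definition allowed_mats :: "(int \<times> int \<times> int \<times> int) set" where
  "allowed_mats = {(1,0,0,1), (-1,0,0,-1), (0,-1,1,-1), (0,-1,1,0), (1,-1,1,0)}"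

text \<open>The matrix of the automorphism of (L \<inter> H)/Z(L \<inter> H) = Z^2 induced by conjugation
  with d, w.r.t. the basis of classes of a, b (columns are images of basis vectors):
  d a d^-1 = a^m11 b^m21 and d b d^-1 = a^m12 b^m22 modulo the centre.\<close>
definition induced_matrix :: "osc set \<Rightarrow> osc \<Rightarrow> osc \<Rightarrow> osc \<Rightarrow> int \<times> int \<times> int \<times> int \<Rightarrow> bool" where
  "induced_matrix L a b d M = (case M of (m11, m12, m21, m22) \<Rightarrow>
      osc_mult (osc_conj d a) (osc_inv (osc_mult (osc_ipow a m11) (osc_ipow b m21)))
        \<in> osc_center (L \<inter> Hset)
    \<and> osc_mult (osc_conj d b) (osc_inv (osc_mult (osc_ipow a m12) (osc_ipow b m22)))
        \<in> osc_center (L \<inter> Hset))"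

definition adapted :: "osc set \<Rightarrow> osc \<Rightarrow> osc \<Rightarrow> osc \<Rightarrow> osc \<Rightarrow> bool" where
  "adapted L a b c d \<longleftrightarrow>
     osc_gen {a, b, c, d} = L
   \<and> snd (snd d) = lambda_of L
   \<and> osc_gen {a, b, c} = L \<inter> Hset
   \<and> c \<in> osc_center (L \<inter> Hset)
   \<and> osc_comm a b = osc_ipow c (int (r_of L))
   \<and> (\<exists>M\<in>allowed_mats. induced_matrix L a b d M)
   \<and> Im (cnj (fst a) * fst b) > 0"

end

theory Submission
  imports Defs
begin

(* The projection of L \<inter> H to the plane is a unimodular lattice \<Lambda>. Commutators of lifts of a
   basis a, b of \<Lambda> with wedge a b = 1 are central and equal to (0, 1, 0), and the centre of L \<inter> H
   is discrete, hence equal to (1/r)\<int>; the coordinates (m, n, c) \<mapsto> (ma + nb, ..., c/r) then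
   identify L \<inter> H with H_1^r(\<int>). Conjugation by an element of angle t rotates \<Lambda> by e^{it}, so
   the trace 2 cos t is an integer: the angles form a discrete subgroup of \<real> inside (\<pi>/6)\<int>,
   generated by some \<lambda>, and 2 cos t \<noteq> \<plusminus>\<surd>3 leaves exactly the admissible values.
   A reduced basis (a shortest primitive vector a and b = a(-\<mu> + i\<nu>) with (\<mu>, \<nu>) \<in> \<F>) is
   rotated until a is real and positive, giving \<alpha> and \<beta>. Finally e^{i\<lambda>} = s + t(-\<mu> + i\<nu>)
   with integers s, t; inside \<F> this forces the square lattice when e^{i\<lambda>} = i and the
   hexagonal one when Im e^{i\<lambda>} = \<surd>3/2, and in every case e^{i\<lambda>} acts on (a, b) by one of the
   allowed matrices. *)

subsection \<open>The area form and the group law\<close>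

definition wedge :: "complex \<Rightarrow> complex \<Rightarrow> real" where
  "wedge x y = Im (cnj x * y)"

lemma wedge_eq: "wedge x y = Re x * Im y - Im x * Re y"
  by (simp add: wedge_def)

lemma wedge_self [simp]: "wedge x x = 0"
  by (simp add: wedge_eq)

lemma wedge_swap: "wedge y x = - wedge x y"
  by (simp add: wedge_eq)

lemma wedge_diff_left: "wedge (a - b) c = wedge a c - wedge b c"
  by (simp add: wedge_eq algebra_simps)

lemma wedge_uminus_right: "wedge c (- a) = - wedge c a"
  by (simp add: wedge_eq)

lemma wedge_int_comb:
  "wedge (of_int m1 * a + of_int n1 * b) (of_int m2 * a + of_int n2 * b)
     = (of_int m1 * of_int n2 - of_int n1 * of_int m2) * wedge a b"
  by (simp add: wedge_eq algebra_simps)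

lemma wedge_decomp:
  "complex_of_real (wedge a b) * x = complex_of_real (wedge x b) * a + complex_of_real (wedge a x) * b"
  by (simp add: complex_eq_iff wedge_eq algebra_simps)

lemma abs_wedge_le: "\<bar>wedge x y\<bar> \<le> cmod x * cmod y"
  unfolding wedge_def by (metis abs_Im_le_cmod complex_mod_cnj norm_mult)

lemma wedge_mult_unit: "cmod c = 1 \<Longrightarrow> wedge (c * x) (c * y) = wedge x y"
proof -
  assume "cmod c = 1"
  hence "Re c ^ 2 + Im c ^ 2 = 1" by (simp add: cmod_def)
  moreover have "wedge (c * x) (c * y) = (Re c ^ 2 + Im c ^ 2) * wedge x y"
    by (simp add: wedge_eq power2_eq_square) algebra
  ultimately show ?thesis by simp
qed

lemma wedge_trace: "wedge (e * u) v + wedge u (e * v) = 2 * Re e * wedge u v"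
  by (simp add: wedge_eq algebra_simps)

lemma osc_mult_eq:
  "osc_mult (x1, z1, t1) (x2, z2, t2) =
     (x1 + exp (\<i> * of_real t1) * x2, z1 + z2 + wedge x1 (exp (\<i> * of_real t1) * x2) / 2, t1 + t2)"
  by (simp add: osc_mult_def wedge_def)

lemma osc_mult_H: "osc_mult (x1, z1, 0) (x2, z2, 0) = (x1 + x2, z1 + z2 + wedge x1 x2 / 2, 0)"
  by (simp add: osc_mult_eq)

lemma osc_inv_eq: "osc_inv (x, z, t) = (- (exp (- \<i> * of_real t) * x), - z, - t)"
  by (simp add: osc_inv_def)

lemma osc_inv_H: "osc_inv (x, z, 0) = (- x, - z, 0)"
  by (simp add: osc_inv_def)

lemma osc_angle_mult: "snd (snd (osc_mult g h)) = snd (snd g) + snd (snd h)"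
  by (cases g; cases h) (simp add: osc_mult_def)

lemma osc_angle_inv: "snd (snd (osc_inv g)) = - snd (snd g)"
  by (cases g) (simp add: osc_inv_def)

lemma osc_angle_ipow: "snd (snd (osc_ipow g k)) = of_int k * snd (snd g)"
proof -
  have "snd (snd ((osc_mult h ^^ n) osc_one)) = real n * snd (snd h)" for h n
    by (induction n) (simp_all add: osc_one_def osc_angle_mult algebra_simps)
  thus ?thesis by (simp add: osc_ipow_def osc_angle_inv)
qed

lemma osc_mult_inv_H:
  "osc_mult (x, z, 0) (osc_inv (y, w, 0)) = (x - y, z - w - wedge x y / 2, 0)"
  by (simp add: osc_inv_H osc_mult_H wedge_uminus_right)

lemma osc_mult_inv_mult: "osc_mult (osc_mult h (osc_inv p)) p = h"
proof -
  obtain x z t where h: "h = (x, z, t)" by (cases h) auto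
  obtain y w s where p: "p = (y, w, s)" by (cases p) auto
  define E where "E = exp (\<i> * of_real t) * exp (- \<i> * of_real s)"
  have E: "exp (\<i> * of_real (t - s)) = E" unfolding E_def
    by (simp add: right_diff_distrib exp_diff exp_minus divide_inverse)
  have "osc_mult h (osc_inv p) = (x - E * y, z - w - wedge x (E * y) / 2, t - s)"
    by (simp add: h p osc_inv_eq osc_mult_eq E_def wedge_uminus_right mult.assoc)
  thus ?thesis using E by (simp add: h p osc_mult_eq wedge_diff_left)
qed

lemma osc_conj_H:
  "fst (osc_conj d (x, z, 0)) = exp (\<i> * of_real (snd (snd d))) * x"
  "snd (snd (osc_conj d (x, z, 0))) = 0"
proof -
  obtain xd zd td where d: "d = (xd, zd, td)" by (cases d) auto
  have "exp (\<i> * of_real td) * exp (- \<i> * of_real td) = 1" by (simp flip: exp_add)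
  thus "fst (osc_conj d (x, z, 0)) = exp (\<i> * of_real (snd (snd d))) * x"
    by (simp add: d osc_conj_def osc_mult_def osc_inv_def algebra_simps)
  show "snd (snd (osc_conj d (x, z, 0))) = 0"
    by (simp add: osc_conj_def osc_angle_mult osc_angle_inv)
qed

lemma osc_comm_H: "osc_comm (u, zu, 0) (v, zv, 0) = (0, wedge u v, 0)"
  by (simp add: osc_comm_def osc_mult_H osc_inv_H wedge_eq algebra_simps)

lemma central_in_osc_center: "(0, z, 0) \<in> G \<Longrightarrow> (0, z, 0) \<in> osc_center G"
  by (cases "G = {}") (auto simp: osc_center_def osc_mult_def split: prod.splits)

lemma osc_subgroupD:
  assumes "osc_subgroup L"
  shows "osc_one \<in> L" "x \<in> L \<Longrightarrow> y \<in> L \<Longrightarrow> osc_mult x y \<in> L" "x \<in> L \<Longrightarrow> osc_inv x \<in> L"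
  using assms by (simp_all add: osc_subgroup_def)

lemma osc_subgroup_Hset: "osc_subgroup Hset"
  by (auto simp: osc_subgroup_def Hset_def osc_one_def osc_angle_mult osc_angle_inv)

lemma osc_subgroup_Int: "osc_subgroup A \<Longrightarrow> osc_subgroup B \<Longrightarrow> osc_subgroup (A \<inter> B)"
  by (auto simp: osc_subgroup_def)

lemma osc_subgroup_osc_gen: "osc_subgroup (osc_gen A)"
  unfolding osc_subgroup_def by (auto intro: osc_gen.intros)

lemma osc_gen_least: "osc_subgroup L \<Longrightarrow> A \<subseteq> L \<Longrightarrow> osc_gen A \<subseteq> L"
proof
  fix x assume L: "osc_subgroup L" and "A \<subseteq> L" "x \<in> osc_gen A"
  from this(3,2) show "x \<in> L"
    by (induction rule: osc_gen.induct) (auto simp: osc_subgroupD[OF L])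
qed

lemma osc_gen_mono: "A \<subseteq> B \<Longrightarrow> osc_gen A \<subseteq> osc_gen B"
  by (rule osc_gen_least[OF osc_subgroup_osc_gen]) (auto intro: osc_gen.intros)

lemma osc_ipow_in: "osc_subgroup L \<Longrightarrow> g \<in> L \<Longrightarrow> osc_ipow g k \<in> L"
proof -
  assume L: "osc_subgroup L" and g: "g \<in> L"
  have "(osc_mult h ^^ n) osc_one \<in> L" if "h \<in> L" for h n
    using that by (induction n) (simp_all add: osc_subgroupD[OF L])
  thus ?thesis using g by (simp add: osc_ipow_def osc_subgroupD[OF L])
qed

lemma osc_conj_in: "osc_subgroup L \<Longrightarrow> d \<in> L \<Longrightarrow> h \<in> L \<Longrightarrow> osc_conj d h \<in> L"
  by (simp add: osc_conj_def osc_subgroupD)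

lemma osc_gen_angle_generator:
  assumes L: "osc_subgroup L" and A: "osc_gen A = L \<inter> Hset"
    and angles: "(\<lambda>g. snd (snd g)) ` L = {of_int k * lam | k. True}"
    and d: "d \<in> L" "snd (snd d) = lam"
  shows "osc_gen (A \<union> {d}) = L"
proof
  have "A \<subseteq> L" using A osc_gen.gen_base[of _ A] by blast
  thus "osc_gen (A \<union> {d}) \<subseteq> L" using d(1) by (intro osc_gen_least[OF L]) auto
  show "L \<subseteq> osc_gen (A \<union> {d})"
  proof
    fix h assume h: "h \<in> L"
    then obtain k where k: "snd (snd h) = of_int k * lam" using angles by blast
    let ?p = "osc_ipow d k"
    have "osc_mult h (osc_inv ?p) \<in> L \<inter> Hset"
      using osc_subgroupD[OF L] osc_ipow_in[OF L d(1)] h k d(2)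
      by (simp add: Hset_def osc_angle_mult osc_angle_inv osc_angle_ipow)
    hence "osc_mult h (osc_inv ?p) \<in> osc_gen (A \<union> {d})"
      using osc_gen_mono[of A "A \<union> {d}"] unfolding A by blast
    moreover have "?p \<in> osc_gen (A \<union> {d})"
      by (rule osc_ipow_in[OF osc_subgroup_osc_gen]) (auto intro: osc_gen.gen_base)
    ultimately have "osc_mult (osc_mult h (osc_inv ?p)) ?p \<in> osc_gen (A \<union> {d})"
      by (rule osc_gen.gen_mult)
    thus "h \<in> osc_gen (A \<union> {d})" by (simp add: osc_mult_inv_mult)
  qed
qed

subsection \<open>The invariant r\<close>

definition central :: "'a set \<Rightarrow> ('a \<Rightarrow> 'a \<Rightarrow> 'a) \<Rightarrow> 'a \<Rightarrow> bool" where
  "central A m z \<longleftrightarrow> z \<in> A \<and> (\<forall>y\<in>A. m z y = m y z)"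

definition pow_Suc :: "('a \<Rightarrow> 'a \<Rightarrow> 'a) \<Rightarrow> 'a \<Rightarrow> nat \<Rightarrow> 'a" where
  "pow_Suc m z n = (m z ^^ n) z"

text \<open>In \<open>H\<^sub>1\<^sup>r(\<int>)\<close> the \<open>(n+1)\<close>-th power of every central element is of the form
  \<open>xy(yx)\<^sup>-\<^sup>1\<close> iff \<open>r\<close> divides \<open>n+1\<close>; this makes \<open>r\<close> an isomorphism invariant.\<close>
definition central_pows_comm :: "'a set \<Rightarrow> ('a \<Rightarrow> 'a \<Rightarrow> 'a) \<Rightarrow> nat \<Rightarrow> bool" where
  "central_pows_comm A m n \<longleftrightarrow>
     (\<forall>z. central A m z \<longrightarrow> (\<exists>x\<in>A. \<exists>y\<in>A. m x y = m (pow_Suc m z n) (m y x)))"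

locale magma_iso =
  fixes f :: "'a \<Rightarrow> 'b" and A :: "'a set" and B :: "'b set"
    and m :: "'a \<Rightarrow> 'a \<Rightarrow> 'a" and m' :: "'b \<Rightarrow> 'b \<Rightarrow> 'b"
  assumes bij: "bij_betw f A B"
    and closed: "x \<in> A \<Longrightarrow> y \<in> A \<Longrightarrow> m x y \<in> A"
    and hom: "x \<in> A \<Longrightarrow> y \<in> A \<Longrightarrow> f (m x y) = m' (f x) (f y)"
begin

lemma mem: "x \<in> A \<Longrightarrow> f x \<in> B"
  using bij by (auto simp: bij_betw_def)

lemma pow_Suc_hom: "z \<in> A \<Longrightarrow> pow_Suc m z n \<in> A \<and> f (pow_Suc m z n) = pow_Suc m' (f z) n"
  unfolding pow_Suc_def by (induction n) (simp_all add: closed hom)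

lemma central_pows_comm_transfer:
  assumes "central_pows_comm A m n"
  shows "central_pows_comm B m' n"
  unfolding central_pows_comm_def
proof (intro allI impI)
  fix z' assume c': "central B m' z'"
  then obtain z where zA: "z \<in> A" and fz: "f z = z'"
    using bij by (auto simp: bij_betw_def central_def)
  have inj: "inj_on f A" using bij by (simp add: bij_betw_def)
  have "central A m z" unfolding central_def
  proof (intro conjI ballI)
    fix y assume yA: "y \<in> A"
    have "f (m z y) = f (m y z)"
      using c' hom[OF zA yA] hom[OF yA zA] fz mem[OF yA] by (simp add: central_def)
    thus "m z y = m y z" using inj closed zA yA by (meson inj_on_def)
  qed fact
  then obtain x y where xA: "x \<in> A" and yA: "y \<in> A" and e: "m x y = m (pow_Suc m z n) (m y x)"
    using assms by (auto simp: central_pows_comm_def)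
  note p = pow_Suc_hom[OF zA, of n]
  have "m' (f x) (f y) = m' (pow_Suc m' z' n) (m' (f y) (f x))"
    using arg_cong[OF e, of f] hom[OF xA yA] hom[OF conjunct1[OF p] closed[OF yA xA]] p fz hom[OF yA xA]
    by simp
  thus "\<exists>x\<in>B. \<exists>y\<in>B. m' x y = m' (pow_Suc m' z' n) (m' y x)"
    using mem[OF xA] mem[OF yA] by blast
qed

lemma inverse: "magma_iso (the_inv_into A f) B A m' m"
proof
  show "bij_betw (the_inv_into A f) B A" using bij by (rule bij_betw_the_inv_into)
  have inj: "inj_on f A" and im: "f ` A = B" using bij by (auto simp: bij_betw_def)
  fix x y assume "x \<in> B" "y \<in> B"
  then obtain a b where a: "a \<in> A" "x = f a" and b: "b \<in> A" "y = f b" using im by auto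
  have e: "m' x y = f (m a b)" using a b hom by simp
  show "m' x y \<in> B" unfolding e using a b closed im by blast
  show "the_inv_into A f (m' x y) = m (the_inv_into A f x) (the_inv_into A f y)"
    unfolding e using a b closed the_inv_into_f_f[OF inj] by simp
qed

lemma central_pows_comm_iff: "central_pows_comm B m' n \<longleftrightarrow> central_pows_comm A m n"
  using central_pows_comm_transfer magma_iso.central_pows_comm_transfer[OF inverse] by blast

end

lemma heis_central_iff: "0 < r \<Longrightarrow> central UNIV (heis_mult r) z \<longleftrightarrow> (\<exists>c. z = (0, 0, c))"
proof
  assume r: "0 < r" and c: "central UNIV (heis_mult r) z"
  obtain a b c where z: "z = (a, b, c)" by (cases z) auto
  have "heis_mult r z (1, 0, 0) = heis_mult r (1, 0, 0) z"
    "heis_mult r z (0, 1, 0) = heis_mult r (0, 1, 0) z"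
    using c by (auto simp: central_def)
  thus "\<exists>c. z = (0, 0, c)" using r by (auto simp: z heis_mult_def)
qed (auto simp: central_def heis_mult_def)

lemma heis_pow_Suc_central: "pow_Suc (heis_mult r) (0, 0, c) n = (0, 0, int (Suc n) * c)"
  unfolding pow_Suc_def by (induction n) (auto simp: heis_mult_def algebra_simps)

lemma heis_central_pows_comm_iff:
  assumes r: "0 < r"
  shows "central_pows_comm UNIV (heis_mult r) n \<longleftrightarrow> int r dvd int (Suc n)"
proof
  assume "central_pows_comm UNIV (heis_mult r) n"
  then obtain a1 b1 c1 a2 b2 c2 where
    "heis_mult r (a1, b1, c1) (a2, b2, c2)
       = heis_mult r (pow_Suc (heis_mult r) (0, 0, 1) n) (heis_mult r (a2, b2, c2) (a1, b1, c1))"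
    using heis_central_iff[OF r] unfolding central_pows_comm_def by fastforce
  hence "int (Suc n) = int r * (a1 * b2 - a2 * b1)"
    by (simp add: heis_pow_Suc_central heis_mult_def algebra_simps)
  thus "int r dvd int (Suc n)" by (metis dvd_triv_left)
next
  assume "int r dvd int (Suc n)"
  then obtain k where k: "int (Suc n) = int r * k" by (auto elim: dvdE)
  show "central_pows_comm UNIV (heis_mult r) n" unfolding central_pows_comm_def
  proof (intro allI impI)
    fix z assume "central UNIV (heis_mult r) z"
    then obtain c where z: "z = (0, 0, c)" using heis_central_iff[OF r] by blast
    have "heis_mult r (1, 0, 0) (0, k * c, 0)
        = heis_mult r (pow_Suc (heis_mult r) z n) (heis_mult r (0, k * c, 0) (1, 0, 0))"
      using k by (simp add: z heis_pow_Suc_central heis_mult_def algebra_simps)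
    thus "\<exists>x\<in>UNIV. \<exists>y\<in>UNIV. heis_mult r x y = heis_mult r (pow_Suc (heis_mult r) z n) (heis_mult r y x)"
      by blast
  qed
qed

lemma heis_iso_param_eq:
  assumes "0 < r1" "0 < r2"
    and "magma_iso f1 A UNIV m (heis_mult r1)" "magma_iso f2 A UNIV m (heis_mult r2)"
  shows "r1 = r2"
proof -
  have eq: "int r1 dvd int (Suc n) \<longleftrightarrow> int r2 dvd int (Suc n)" for n
    using magma_iso.central_pows_comm_iff[OF assms(3), of n] magma_iso.central_pows_comm_iff[OF assms(4), of n]
      heis_central_pows_comm_iff[OF assms(1)] heis_central_pows_comm_iff[OF assms(2)] by simp
  have "Suc (r1 - 1) = r1" "Suc (r2 - 1) = r2" using assms(1,2) by auto
  hence "int r2 dvd int r1" "int r1 dvd int r2" using eq[of "r1 - 1"] eq[of "r2 - 1"] by simp_all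
  thus ?thesis by (simp add: dvd_antisym)
qed

lemma r_of_eqI:
  assumes r: "0 < r" and iso: "magma_iso g UNIV (L \<inter> Hset) (heis_mult r) osc_mult"
  shows "r_of L = r"
  unfolding r_of_def
proof (rule the_equality)
  interpret inv: magma_iso "the_inv_into UNIV g" "L \<inter> Hset" UNIV osc_mult "heis_mult r"
    by (rule magma_iso.inverse[OF iso])
  show "0 < r \<and> (\<exists>f. bij_betw f (L \<inter> Hset) UNIV \<and>
      (\<forall>x\<in>L \<inter> Hset. \<forall>y\<in>L \<inter> Hset. f (osc_mult x y) = heis_mult r (f x) (f y)))"
    using r inv.bij inv.hom by blast
  fix r' assume "0 < r' \<and> (\<exists>f. bij_betw f (L \<inter> Hset) UNIV \<and>
      (\<forall>x\<in>L \<inter> Hset. \<forall>y\<in>L \<inter> Hset. f (osc_mult x y) = heis_mult r' (f x) (f y)))"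
  then obtain f where r': "0 < r'" and f: "bij_betw f (L \<inter> Hset) UNIV"
    and hom: "\<forall>x\<in>L \<inter> Hset. \<forall>y\<in>L \<inter> Hset. f (osc_mult x y) = heis_mult r' (f x) (f y)"
    by blast
  have "magma_iso f (L \<inter> Hset) UNIV osc_mult (heis_mult r')"
    using f hom inv.closed by unfold_locales auto
  thus "r' = r" by (rule heis_iso_param_eq[OF r' r _ inv.magma_iso_axioms])
qed

subsection \<open>Unimodular lattices in the plane\<close>

definition zspan :: "complex \<Rightarrow> complex \<Rightarrow> complex set" where
  "zspan u v = {of_int s * u + of_int t * v | s t. True}"

lemma zspan_left: "u \<in> zspan u v"
  unfolding zspan_def by (rule CollectI, rule exI[of _ 1], rule exI[of _ 0]) simp

lemma zspan_right: "v \<in> zspan u v"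
  unfolding zspan_def by (rule CollectI, rule exI[of _ 0], rule exI[of _ 1]) simp

lemma zspan_int_comb:
  assumes "x \<in> zspan u v" "y \<in> zspan u v"
  shows "of_int p * x + of_int q * y \<in> zspan u v"
proof -
  obtain s t s' t' where "x = of_int s * u + of_int t * v" "y = of_int s' * u + of_int t' * v"
    using assms by (auto simp: zspan_def)
  hence "of_int p * x + of_int q * y = of_int (p * s + q * s') * u + of_int (p * t + q * t') * v"
    by (simp add: algebra_simps)
  thus ?thesis unfolding zspan_def by blast
qed

lemma zspan_mult: "(\<lambda>x. c * x) ` zspan u v = zspan (c * u) (c * v)"
proof (intro equalityI subsetI)
  fix y assume "y \<in> (\<lambda>x. c * x) ` zspan u v"
  then obtain s t where "y = c * (of_int s * u + of_int t * v)" by (auto simp: zspan_def)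
  hence "y = of_int s * (c * u) + of_int t * (c * v)" by (simp add: algebra_simps)
  thus "y \<in> zspan (c * u) (c * v)" unfolding zspan_def by blast
next
  fix y assume "y \<in> zspan (c * u) (c * v)"
  then obtain s t where "y = of_int s * (c * u) + of_int t * (c * v)" by (auto simp: zspan_def)
  hence "y = c * (of_int s * u + of_int t * v)" by (simp add: algebra_simps)
  moreover have "of_int s * u + of_int t * v \<in> zspan u v" unfolding zspan_def by blast
  ultimately show "y \<in> (\<lambda>x. c * x) ` zspan u v" by blast
qed

lemma wedge_zspan_int:
  assumes "\<bar>wedge u v\<bar> = 1" "x \<in> zspan u v" "y \<in> zspan u v"
  shows "\<exists>k::int. wedge x y = of_int k"
proof -
  obtain s t p q where "x = of_int s * u + of_int t * v" "y = of_int p * u + of_int q * v"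
    using assms(2,3) by (auto simp: zspan_def)
  moreover have "wedge u v = 1 \<or> wedge u v = -1" using assms(1) by auto
  ultimately have "wedge x y = of_int (s * q - t * p) \<or> wedge x y = of_int (- (s * q - t * p))"
    using wedge_int_comb by auto
  thus ?thesis by blast
qed

lemma zspan_eq_of_wedge_one:
  assumes uv: "\<bar>wedge u v\<bar> = 1" and a: "a \<in> zspan u v" and b: "b \<in> zspan u v" and ab: "wedge a b = 1"
  shows "zspan u v = zspan a b"
proof
  show "zspan a b \<subseteq> zspan u v" using zspan_int_comb[OF a b] by (auto simp: zspan_def)
  show "zspan u v \<subseteq> zspan a b"
  proof
    fix x assume x: "x \<in> zspan u v"
    obtain s t where "wedge x b = of_int s" "wedge a x = of_int t"
      using wedge_zspan_int[OF uv x b] wedge_zspan_int[OF uv a x] by blast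
    hence "x = of_int s * a + of_int t * b" using wedge_decomp[of a b x] ab by simp
    thus "x \<in> zspan a b" unfolding zspan_def by blast
  qed
qed

text \<open>The coordinates of \<open>x\<close> are \<open>\<plusminus>wedge x v\<close> and \<open>\<plusminus>wedge u x\<close>, which are bounded on discs.\<close>
lemma finite_zspan_cball:
  assumes uv: "\<bar>wedge u v\<bar> = 1"
  shows "finite {x \<in> zspan u v. cmod x \<le> R}"
proof -
  define N where "N = \<lceil>R * (cmod u + cmod v)\<rceil>"
  have "{x \<in> zspan u v. cmod x \<le> R}
      \<subseteq> (\<lambda>(s, t). of_int s * u + of_int t * v) ` ({-N..N} \<times> {-N..N})"
  proof
    fix x assume "x \<in> {x \<in> zspan u v. cmod x \<le> R}"
    then obtain s t where xs: "x = of_int s * u + of_int t * v" and R: "cmod x \<le> R"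
      by (auto simp: zspan_def)
    have "wedge x v = of_int s * wedge u v" "wedge u x = of_int t * wedge u v"
      using wedge_int_comb[of s u t v 0 1] wedge_int_comb[of 1 u 0 v s t] xs by simp_all
    hence "\<bar>of_int s\<bar> = \<bar>wedge x v\<bar>" "\<bar>of_int t\<bar> = \<bar>wedge u x\<bar>" using uv by (simp_all add: abs_mult)
    moreover have "\<bar>wedge x v\<bar> \<le> R * (cmod u + cmod v)" "\<bar>wedge u x\<bar> \<le> R * (cmod u + cmod v)"
      using abs_wedge_le[of x v] abs_wedge_le[of u x] R
      by (smt (verit) mult_left_mono mult_right_mono norm_ge_zero mult.commute)+
    ultimately have "\<bar>s\<bar> \<le> N" "\<bar>t\<bar> \<le> N" unfolding N_def by (simp_all add: le_ceiling_iff)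
    thus "x \<in> (\<lambda>(s, t). of_int s * u + of_int t * v) ` ({-N..N} \<times> {-N..N})"
      using xs by force
  qed
  thus ?thesis by (rule finite_subset) auto
qed

lemma shortest_primitive_exists:
  assumes uv: "\<bar>wedge u v\<bar> = 1"
  obtains a b where "a \<in> zspan u v" "b \<in> zspan u v" "wedge a b = 1"
    "\<And>x y. x \<in> zspan u v \<Longrightarrow> y \<in> zspan u v \<Longrightarrow> wedge x y = 1 \<Longrightarrow> cmod a \<le> cmod x"
proof -
  define P where "P = {x \<in> zspan u v. \<exists>y\<in>zspan u v. wedge x y = 1}"
  obtain p where p: "p \<in> P"
  proof (cases "wedge u v = 1")
    case True thus ?thesis using that zspan_left zspan_right unfolding P_def by blast
  next
    case False hence "wedge v u = 1" using uv wedge_swap[of v u] by auto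
    thus ?thesis using that zspan_left zspan_right unfolding P_def by blast
  qed
  define F where "F = {x \<in> P. cmod x \<le> cmod p}"
  have "finite F" unfolding F_def
    by (rule finite_subset[OF _ finite_zspan_cball[OF uv, of "cmod p"]]) (auto simp: P_def)
  moreover have "F \<noteq> {}" using p by (auto simp: F_def)
  ultimately obtain a where "is_arg_min cmod (\<lambda>x. x \<in> F) a"
    using ex_is_arg_min_if_finite by blast
  hence a: "a \<in> P" "cmod a \<le> cmod p" and min: "\<And>x. x \<in> P \<Longrightarrow> cmod x \<le> cmod p \<Longrightarrow> cmod a \<le> cmod x"
    by (auto simp: is_arg_min_def F_def not_less)
  show ?thesis
  proof (rule that)
    show "a \<in> zspan u v" using a by (simp add: P_def)
    show "wedge a (SOME y. y \<in> zspan u v \<and> wedge a y = 1) = 1"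
      "(SOME y. y \<in> zspan u v \<and> wedge a y = 1) \<in> zspan u v"
      using someI_ex[of "\<lambda>y. y \<in> zspan u v \<and> wedge a y = 1"] a by (auto simp: P_def)
    fix x y assume "x \<in> zspan u v" "y \<in> zspan u v" "wedge x y = 1"
    hence "x \<in> P" by (auto simp: P_def)
    thus "cmod a \<le> cmod x" using min a(2) by fastforce
  qed
qed

text \<open>On the boundary arc \<open>|w| = 1\<close> with \<open>Re w > 0\<close> the candidate \<open>(-Re w, Im w)\<close> lies outside
  \<open>\<F>\<close>; replacing the basis \<open>(a, aw)\<close> by \<open>(aw, -a)\<close> replaces \<open>w\<close> by \<open>-1/w = -cnj w\<close>.\<close>
lemma Fdom_reduced:
  assumes Re: "- 1/2 \<le> Re w" "Re w < 1/2" and Im: "Im w > 0" and norm: "cmod w \<ge> 1"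
  shows "(- Re w, Im w) \<in> Fdom \<or> (cmod w = 1 \<and> (Re w, Im w) \<in> Fdom)"
proof -
  have sq: "Re w ^ 2 + Im w ^ 2 = (cmod w)^2" by (simp add: cmod_def)
  have "1 \<le> (cmod w)^2" using norm by (rule one_le_power)
  moreover have "cmod w > 1 \<Longrightarrow> 1 < (cmod w)^2" by (rule one_less_power) simp_all
  ultimately show ?thesis using Re Im sq norm unfolding Fdom_def by (cases "Re w \<le> 0") auto
qed

lemma reduced_basis_exists:
  assumes uv: "\<bar>wedge u v\<bar> = 1"
  obtains a \<mu> \<nu> where "zspan u v = zspan a (a * Complex (- \<mu>) \<nu>)"
    "wedge a (a * Complex (- \<mu>) \<nu>) = 1" "(\<mu>, \<nu>) \<in> Fdom"
proof -
  obtain a b0 where a: "a \<in> zspan u v" and b0: "b0 \<in> zspan u v" "wedge a b0 = 1"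
    and min: "\<And>x y. x \<in> zspan u v \<Longrightarrow> y \<in> zspan u v \<Longrightarrow> wedge x y = 1 \<Longrightarrow> cmod a \<le> cmod x"
    using shortest_primitive_exists[OF uv] by blast
  have a0: "a \<noteq> 0" using b0 by (auto simp: wedge_eq)
  define k where "k = \<lfloor>Re (b0 / a) + 1/2\<rfloor>"
  define b where "b = b0 - of_int k * a"
  have b: "b \<in> zspan u v" using zspan_int_comb[OF b0(1) a, of 1 "-k"] by (simp add: b_def)
  have ab: "wedge a b = 1" using b0 by (simp add: b_def wedge_eq algebra_simps)
  have ma: "- a \<in> zspan u v" using zspan_int_comb[OF a a, of "-1" 0] by simp
  have ba: "wedge b (- a) = 1" using ab by (simp add: wedge_eq algebra_simps)
  define w where "w = b / a"
  have bw: "b = a * w" using a0 by (simp add: w_def)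
  have "Re w = Re (b0 / a) - of_int k" using a0 by (simp add: w_def b_def diff_divide_distrib)
  hence Re: "- 1/2 \<le> Re w" "Re w < 1/2" unfolding k_def by linarith+
  have "Im (b / a) = wedge a b / (cmod a)^2"
    by (simp add: wedge_def Im_divide cmod_def algebra_simps power2_eq_square)
  hence Im: "Im w > 0" using ab a0 by (simp add: w_def)
  have norm: "cmod w \<ge> 1" using min[OF b ma ba] a0 by (simp add: w_def norm_divide)
  have uvab: "zspan u v = zspan a b" by (rule zspan_eq_of_wedge_one[OF uv a b ab])
  consider "(- Re w, Im w) \<in> Fdom" | "cmod w = 1" "(Re w, Im w) \<in> Fdom"
    using Fdom_reduced[OF Re Im norm] by blast
  thus ?thesis
  proof cases
    case 1
    have "w = Complex (- (- Re w)) (Im w)" by (simp add: complex_eq_iff)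
    thus ?thesis using that[OF _ _ 1] uvab ab bw by metis
  next
    case 2
    have "w * cnj w = 1" using 2(1) complex_norm_square[of w] by simp
    moreover have "Complex (- Re w) (Im w) = - cnj w" by (simp add: complex_eq_iff)
    ultimately have "- a = b * Complex (- Re w) (Im w)" unfolding bw by (simp add: mult.assoc)
    moreover have "zspan u v = zspan b (- a)" by (rule zspan_eq_of_wedge_one[OF uv b ma ba])
    ultimately show ?thesis using that[OF _ _ 2(2)] ba by metis
  qed
qed

subsection \<open>Heisenberg coordinates on \<open>L \<inter> H\<close>\<close>

locale heis_frame =
  fixes L :: "osc set" and a b :: complex and za zb :: real and r :: nat
  assumes subgroup: "osc_subgroup L"
    and r_pos: "0 < r"
    and centre: "\<And>z. (0, z, 0) \<in> L \<longleftrightarrow> (\<exists>c::int. z = of_int c / real r)"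
    and proj: "fst ` (L \<inter> Hset) = zspan a b"
    and wedge_ab: "wedge a b = 1"
    and a_mem: "(a, za, 0) \<in> L" and b_mem: "(b, zb, 0) \<in> L"
begin

abbreviation "\<alpha> \<equiv> (a, za, 0::real)"
abbreviation "\<beta> \<equiv> (b, zb, 0::real)"
abbreviation "\<gamma> \<equiv> (0::complex, 1 / real r, 0::real)"

text \<open>The correction \<open>-mn/2\<close> makes \<open>coord\<close> a homomorphism from \<open>H\<^sub>1\<^sup>r(\<int>)\<close>: it compensates the
  term \<open>wedge x y / 2\<close> in the product of \<open>Osc\<^sub>1\<close>.\<close>
definition coord :: "int \<times> int \<times> int \<Rightarrow> osc" where
  "coord x = (case x of (m, n, c) \<Rightarrow> (of_int m * a + of_int n * b,
      of_int m * za + of_int n * zb - of_int m * of_int n / 2 + of_int c / real r, 0))"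

lemma coord_eq: "coord (m, n, c) = (of_int m * a + of_int n * b,
      of_int m * za + of_int n * zb - of_int m * of_int n / 2 + of_int c / real r, 0)"
  by (simp add: coord_def)

lemma coord_generators: "coord (1, 0, 0) = \<alpha>" "coord (0, 1, 0) = \<beta>" "coord (0, 0, 1) = \<gamma>"
  by (simp_all add: coord_eq)

lemma coord_hom: "coord (heis_mult r x y) = osc_mult (coord x) (coord y)"
proof -
  obtain m1 n1 c1 m2 n2 c2 where x: "x = (m1, n1, c1)" and y: "y = (m2, n2, c2)"
    by (cases x, cases y) auto
  have "real_of_int (int r * m1 * n2) / real r = of_int m1 * of_int n2" using r_pos by simp
  hence "of_int (m1 + m2) * za + of_int (n1 + n2) * zb - of_int (m1 + m2) * of_int (n1 + n2) / 2
      + of_int (c1 + c2 + int r * m1 * n2) / real r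
     = of_int m1 * za + of_int n1 * zb - of_int m1 * of_int n1 / 2 + of_int c1 / real r +
       (of_int m2 * za + of_int n2 * zb - of_int m2 * of_int n2 / 2 + of_int c2 / real r) +
       (of_int m1 * of_int n2 - of_int n1 * of_int m2) / 2"
    by (simp only: of_int_add add_divide_distrib)
      (simp add: ring_distribs diff_divide_distrib add_divide_distrib)
  moreover have "wedge (of_int m1 * a + of_int n1 * b) (of_int m2 * a + of_int n2 * b)
      = of_int m1 * of_int n2 - of_int n1 * of_int m2"
    using wedge_int_comb wedge_ab by simp
  ultimately show ?thesis
    by (simp add: x y heis_mult_def coord_eq osc_mult_H algebra_simps)
qed

lemma coord_zero: "coord (0, 0, 0) = osc_one"
  by (simp add: coord_eq osc_one_def)

lemma coord_ipow:
  assumes "m * n = 0"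
  shows "osc_ipow (coord (m, n, c)) k = coord (k * m, k * n, k * c)"
proof -
  have pow: "(osc_mult (coord (m', n', c')) ^^ j) osc_one = coord (int j * m', int j * n', int j * c')"
    if "m' * n' = 0" for m' n' c' j
  proof (induction j)
    case (Suc j)
    have z: "int r * m' * (int j * n') = 0" using that by (simp add: mult.left_commute)
    have "(osc_mult (coord (m', n', c')) ^^ Suc j) osc_one
        = coord (heis_mult r (m', n', c') (int j * m', int j * n', int j * c'))"
      using Suc by (simp add: coord_hom)
    also have "heis_mult r (m', n', c') (int j * m', int j * n', int j * c')
        = (int (Suc j) * m', int (Suc j) * n', int (Suc j) * c')"
      by (simp add: heis_mult_def z) (simp add: algebra_simps)
    finally show ?case .
  qed (simp add: coord_zero)
  have "osc_inv (coord (m, n, c)) = coord (- m, - n, - c)"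
    using assms by (simp add: coord_eq osc_inv_H)
  thus ?thesis using pow[OF assms] pow[of "- m" "- n"] assms by (simp add: osc_ipow_def)
qed

lemma coord_in_subgroup:
  assumes G: "osc_subgroup G" and "\<alpha> \<in> G" "\<beta> \<in> G" "\<gamma> \<in> G"
  shows "coord x \<in> G"
proof -
  obtain m n k where x: "x = (m, n, k)" by (cases x) auto
  have "coord x = osc_mult (osc_mult (coord (0, n, 0)) (coord (m, 0, 0))) (coord (0, 0, k))"
    by (simp add: x coord_hom[symmetric] heis_mult_def)
  also have "\<dots> = osc_mult (osc_mult (osc_ipow \<beta> n) (osc_ipow \<alpha> m)) (osc_ipow \<gamma> k)"
    using coord_ipow[of 0 1 0] coord_ipow[of 1 0 0] coord_ipow[of 0 0 1] by (simp add: coord_generators)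
  finally show ?thesis using assms by (simp add: osc_subgroupD osc_ipow_in)
qed

lemma gamma_mem: "\<gamma> \<in> L"
  using centre[of "1 / real r"] by (metis of_int_1)

lemma coord_mem: "coord x \<in> L"
  by (rule coord_in_subgroup[OF subgroup a_mem b_mem gamma_mem])

lemma coord_bij: "bij_betw coord UNIV (L \<inter> Hset)"
  unfolding bij_betw_def
proof
  have coeffs: "x = of_int s * a + of_int t * b \<Longrightarrow> wedge x b = of_int s \<and> wedge a x = of_int t" for x s t
    using wedge_int_comb[of s a t b 0 1] wedge_int_comb[of 1 a 0 b s t] wedge_ab by simp
  show "inj coord"
  proof (rule injI)
    fix x y assume e: "coord x = coord y"
    obtain m1 n1 c1 m2 n2 c2 where x: "x = (m1, n1, c1)" and y: "y = (m2, n2, c2)"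
      by (cases x, cases y) auto
    have "of_int m1 * a + of_int n1 * b = of_int m2 * a + of_int n2 * b"
      using e by (simp add: x y coord_eq)
    from coeffs[OF this] coeffs[OF refl, of m1 n1] have mn: "m1 = m2" "n1 = n2" by auto
    hence "of_int c1 / real r = of_int c2 / real r" using e by (simp add: x y coord_eq)
    thus "x = y" using r_pos x y mn by (simp add: divide_cancel_right)
  qed
  show "range coord = L \<inter> Hset"
  proof
    show "range coord \<subseteq> L \<inter> Hset" using coord_mem by (auto simp: coord_def Hset_def split: prod.splits)
    show "L \<inter> Hset \<subseteq> range coord"
    proof
      fix h assume h: "h \<in> L \<inter> Hset"
      then obtain x z where hx: "h = (x, z, 0)" by (cases h) (auto simp: Hset_def)
      have "x \<in> fst ` (L \<inter> Hset)" using h hx by force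
      then obtain m n where xm: "x = of_int m * a + of_int n * b" using proj by (auto simp: zspan_def)
      let ?z = "z - (of_int m * za + of_int n * zb - of_int m * of_int n / 2)"
      have "osc_mult h (osc_inv (coord (m, n, 0))) = (0, ?z, 0)"
        by (simp add: hx coord_eq osc_mult_inv_H xm wedge_eq algebra_simps)
      moreover have "osc_mult h (osc_inv (coord (m, n, 0))) \<in> L"
        using h coord_mem osc_subgroupD[OF subgroup] by auto
      ultimately obtain c :: int where "?z = of_int c / real r" using centre by auto
      hence "h = coord (m, n, c)" by (simp add: hx coord_eq xm algebra_simps)
      thus "h \<in> range coord" by simp
    qed
  qed
qed

lemma coord_magma_iso: "magma_iso coord UNIV (L \<inter> Hset) (heis_mult r) osc_mult"
  using coord_bij coord_hom by unfold_locales auto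

lemma r_of_eq: "r_of L = r"
  by (rule r_of_eqI[OF r_pos coord_magma_iso])

lemma osc_gen_frame: "osc_gen {\<alpha>, \<beta>, \<gamma>} = L \<inter> Hset"
proof
  show "osc_gen {\<alpha>, \<beta>, \<gamma>} \<subseteq> L \<inter> Hset"
    using osc_gen_least[OF osc_subgroup_Int[OF subgroup osc_subgroup_Hset]] a_mem b_mem gamma_mem
    by (auto simp: Hset_def)
  have "coord x \<in> osc_gen {\<alpha>, \<beta>, \<gamma>}" for x
    by (rule coord_in_subgroup[OF osc_subgroup_osc_gen]) (auto intro: osc_gen.gen_base)
  hence "range coord \<subseteq> osc_gen {\<alpha>, \<beta>, \<gamma>}" by blast
  thus "L \<inter> Hset \<subseteq> osc_gen {\<alpha>, \<beta>, \<gamma>}" using coord_bij by (simp add: bij_betw_def)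
qed

lemma comm_alpha_beta: "osc_comm \<alpha> \<beta> = osc_ipow \<gamma> (int r)"
  using coord_ipow[of 0 0 1 "int r"] wedge_ab r_pos by (simp add: osc_comm_H coord_eq)

lemma induced_matrix_frame:
  assumes d: "d \<in> L"
    and e1: "exp (\<i> * of_real (snd (snd d))) * a = of_int m11 * a + of_int m21 * b"
    and e2: "exp (\<i> * of_real (snd (snd d))) * b = of_int m12 * a + of_int m22 * b"
  shows "induced_matrix L \<alpha> \<beta> d (m11, m12, m21, m22)"
proof -
  have "osc_mult (osc_conj d (x, z, 0)) (osc_inv (osc_mult (osc_ipow \<alpha> i) (osc_ipow \<beta> j)))
          \<in> osc_center (L \<inter> Hset)"
    if h: "(x, z, 0) \<in> L" and e: "exp (\<i> * of_real (snd (snd d))) * x = of_int i * a + of_int j * b"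
    for x z i j
  proof -
    have P: "osc_mult (osc_ipow \<alpha> i) (osc_ipow \<beta> j) = coord (i, j, int r * i * j)"
      using coord_ipow[of 1 0 0 i] coord_ipow[of 0 1 0 j]
      by (simp add: coord_generators coord_hom[symmetric] heis_mult_def)
    obtain y w where c: "osc_conj d (x, z, 0) = (y, w, 0)"
      using osc_conj_H(2) by (metis prod.collapse)
    have "y = fst (coord (i, j, int r * i * j))" using osc_conj_H(1)[of d x z] c e by (simp add: coord_eq)
    then obtain z' where "osc_mult (osc_conj d (x, z, 0)) (osc_inv (coord (i, j, int r * i * j))) = (0, z', 0)"
      by (simp add: c coord_eq osc_mult_inv_H)
    moreover have "osc_mult (osc_conj d (x, z, 0)) (osc_inv (coord (i, j, int r * i * j))) \<in> L"
      using osc_conj_in[OF subgroup d h] coord_mem osc_subgroupD[OF subgroup] by simp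
    ultimately show ?thesis unfolding P using central_in_osc_center[of z' "L \<inter> Hset"]
      by (simp add: Hset_def)
  qed
  thus ?thesis unfolding induced_matrix_def using a_mem b_mem e1 e2 by simp
qed

lemma adapted_frame:
  assumes angles: "(\<lambda>g. snd (snd g)) ` L = {of_int k * lambda_of L | k. True}"
    and d: "d \<in> L" "snd (snd d) = lambda_of L"
    and M: "(m11, m12, m21, m22) \<in> allowed_mats"
    and e1: "exp (\<i> * of_real (lambda_of L)) * a = of_int m11 * a + of_int m21 * b"
    and e2: "exp (\<i> * of_real (lambda_of L)) * b = of_int m12 * a + of_int m22 * b"
  shows "adapted L \<alpha> \<beta> \<gamma> d"
proof -
  have "osc_gen {\<alpha>, \<beta>, \<gamma>, d} = L"
    using osc_gen_angle_generator[OF subgroup osc_gen_frame angles d] by (simp add: insert_commute)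
  moreover have "induced_matrix L \<alpha> \<beta> d (m11, m12, m21, m22)"
    using induced_matrix_frame[OF d(1)] d(2) e1 e2 by simp
  moreover have "\<gamma> \<in> osc_center (L \<inter> Hset)"
    using gamma_mem by (intro central_in_osc_center) (simp add: Hset_def)
  ultimately show ?thesis unfolding adapted_def
    using d(2) osc_gen_frame comm_alpha_beta r_of_eq M wedge_ab by (auto simp: wedge_def)
qed

end

subsection \<open>The admissible values of \<open>\<lambda>\<close>\<close>

lemma lambda_set_sixths: "x \<in> lambda_set \<longleftrightarrow>
   (\<exists>m::int. x = pi * of_int m / 6 \<and> ((m > 0 \<and> 6 dvd m) \<or> m mod 12 \<in> {2,3,4}))"
proof
  assume "x \<in> lambda_set"
  then consider (a) n :: nat where "n > 0" "x = pi * real n"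
    | (b) l0 k where "l0 \<in> {pi/3, pi/2, 2*pi/3}" "x = l0 + 2 * pi * of_int k"
    unfolding lambda_set_def by blast
  thus "\<exists>m::int. x = pi * of_int m / 6 \<and> ((m > 0 \<and> 6 dvd m) \<or> m mod 12 \<in> {2,3,4})"
  proof cases
    case a thus ?thesis by (intro exI[of _ "6 * int n"]) auto
  next
    case b
    have "\<exists>j\<in>{2,3,4::int}. l0 = pi * of_int j / 6" using b(1) by auto
    then obtain j :: int where j: "j \<in> {2,3,4}" "l0 = pi * of_int j / 6" by blast
    have "x = pi * of_int (j + 12 * k) / 6" using b(2) j(2) by (simp add: field_simps)
    moreover have "(j + 12 * k) mod 12 = j" using j(1) by auto
    ultimately show ?thesis using j(1) by (intro exI[of _ "j + 12 * k"]) simp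
  qed
next
  assume "\<exists>m::int. x = pi * of_int m / 6 \<and> ((m > 0 \<and> 6 dvd m) \<or> m mod 12 \<in> {2,3,4})"
  then obtain m :: int where x: "x = pi * of_int m / 6"
    and m: "(m > 0 \<and> 6 dvd m) \<or> m mod 12 \<in> {2,3,4}" by blast
  show "x \<in> lambda_set"
  proof (cases "m > 0 \<and> 6 dvd m")
    case True
    then obtain i where "m = 6 * i" "i > 0" by (auto elim: dvdE)
    hence "x = pi * real (nat i)" "nat i > 0" using x by simp_all
    thus ?thesis unfolding lambda_set_def by blast
  next
    case False
    hence j: "m mod 12 \<in> {2,3,4}" using m by auto
    have "real_of_int m = of_int (m mod 12) + 12 * of_int (m div 12)"
      by (metis mod_mult_div_eq of_int_add of_int_mult of_int_numeral)
    hence x12: "x = pi * of_int (m mod 12) / 6 + 2 * pi * of_int (m div 12)"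
      unfolding x by (simp add: field_simps)
    have "pi * of_int (m mod 12) / 6 \<in> {pi/3, pi/2, 2*pi/3}" using j by auto
    thus ?thesis unfolding lambda_set_def x12 by blast
  qed
qed

lemma lambda_set_nonzero: "x \<in> lambda_set \<Longrightarrow> x \<noteq> 0"
  unfolding lambda_set_sixths by auto

lemma lambda_set_uminus: "x \<in> lambda_set \<Longrightarrow> - x \<notin> lambda_set"
proof
  assume "x \<in> lambda_set" "- x \<in> lambda_set"
  then obtain m m' :: int where x: "x = pi * of_int m / 6" "(m > 0 \<and> 6 dvd m) \<or> m mod 12 \<in> {2,3,4}"
    and x': "- x = pi * of_int m' / 6" "(m' > 0 \<and> 6 dvd m') \<or> m' mod 12 \<in> {2,3,4}"
    unfolding lambda_set_sixths by blast
  have "pi * of_int (- m) = pi * of_int m'" using x x' by simp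
  hence "m' = - m" by (simp only: mult_cancel_left of_int_eq_iff) auto
  moreover have "(- m) mod 12 \<notin> {2,3,4}" if "6 dvd m"
    using that by auto presburger+
  moreover have "\<not> 6 dvd m \<and> (- m) mod 12 \<notin> {2,3,4}" if "m mod 12 \<in> {2,3,4}"
    using that by auto presburger+
  ultimately show False using x(2) x'(2) by auto
qed

lemma lambda_set_generator_unique:
  assumes l: "l \<in> lambda_set" and l': "l' \<in> lambda_set"
    and eq: "{of_int k * l | k. True} = {of_int k * l' | k::int. True}"
  shows "l = l'"
proof -
  obtain j :: int where j: "l = of_int j * l'" using eq[symmetric] by (force intro: exI[of _ 1])
  obtain k :: int where k: "l' = of_int k * l" using eq by (force intro: exI[of _ 1])
  have "l * 1 = l * of_int (j * k)" using j k by (simp add: algebra_simps)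
  hence "j * k = 1" using lambda_set_nonzero[OF l] by (metis mult_cancel_left of_int_eq_1_iff)
  hence "j = 1 \<or> j = -1" by (auto simp: zmult_eq_1_iff)
  moreover have "j \<noteq> -1" using j lambda_set_uminus[OF l'] l by auto
  ultimately show ?thesis using j by simp
qed

lemma lambda_of_eqI:
  assumes "lam \<in> lambda_set" and "(\<lambda>g. snd (snd g)) ` L = {of_int k * lam | k. True}"
  shows "lambda_of L = lam"
  unfolding lambda_of_def
  using assms lambda_set_generator_unique by (intro the_equality) auto

lemma multiple_of_2pi_sixth_iff:
  "(\<exists>k::int. real q * (pi * of_int m / 6) = 2 * pi * of_int k) \<longleftrightarrow> (12::int) dvd (int q * m)"
proof
  assume "\<exists>k::int. real q * (pi * of_int m / 6) = 2 * pi * of_int k"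
  then obtain k :: int where "real q * (pi * of_int m / 6) = 2 * pi * of_int k" by blast
  hence "pi * (of_int (int q * m)) = pi * of_int (12 * k)" by (simp add: field_simps)
  hence "int q * m = 12 * k" by (simp only: mult_cancel_left of_int_eq_iff) simp
  thus "(12::int) dvd (int q * m)" by simp
next
  assume "(12::int) dvd (int q * m)"
  then obtain k where k: "int q * m = 12 * k" by (auto elim: dvdE)
  have "real q * (pi * of_int m / 6) = pi * of_int (int q * m) / 6" by simp
  also have "\<dots> = 2 * pi * of_int k" unfolding k by simp
  finally show "\<exists>k::int. real q * (pi * of_int m / 6) = 2 * pi * of_int k" by blast
qed

lemma ord_lam_sixth_dvd: "(12::int) dvd (int (ord_lam (pi * of_int m / 6)) * m)"
proof -
  have "1 \<le> (12::nat) \<and> (\<exists>k::int. real 12 * (pi * of_int m / 6) = 2 * pi * of_int k)"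
    by (simp only: multiple_of_2pi_sixth_iff) simp
  hence "\<exists>k::int. real (ord_lam (pi * of_int m / 6)) * (pi * of_int m / 6) = 2 * pi * of_int k"
    unfolding ord_lam_def by (rule LeastI2_ex[OF exI]) simp
  thus ?thesis by (simp only: multiple_of_2pi_sixth_iff)
qed

lemma ord_lam_sixth_le:
  assumes "6 dvd m"
  shows "ord_lam (pi * of_int m / 6) \<le> 2"
proof -
  obtain i where "m = 6 * i" using assms by (auto elim: dvdE)
  hence "1 \<le> (2::nat) \<and> (\<exists>k::int. real 2 * (pi * of_int m / 6) = 2 * pi * of_int k)"
    by (simp only: multiple_of_2pi_sixth_iff) simp
  thus ?thesis unfolding ord_lam_def by (rule Least_le)
qed

lemma exp_i_times: "exp (\<i> * of_real y) = Complex (cos y) (sin y)"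
  by (simp add: cis_conv_exp[symmetric] complex_eq_iff)

lemma exp_i_pi_sixth_mod:
  "exp (\<i> * of_real (pi * of_int m / 6)) = exp (\<i> * of_real (pi * of_int (m mod 12) / 6))"
proof -
  have "real_of_int m = of_int (m mod 12) + 12 * of_int (m div 12)"
    by (metis mod_mult_div_eq of_int_add of_int_mult of_int_numeral)
  hence "pi * of_int m / 6 = pi * of_int (m mod 12) / 6 + 2 * pi * of_int (m div 12)"
    by (simp add: field_simps)
  moreover have "exp (\<i> * of_real (x + 2 * pi * of_int k)) = exp (\<i> * of_real x)" for x k
  proof -
    have "\<i> * of_real (x + 2 * pi * of_int k) = \<i> * of_real x + \<i> * (of_int k * (of_real pi * 2))"
      by (simp add: algebra_simps)
    thus ?thesis by simp
  qed
  ultimately show ?thesis by (simp only:)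
qed

lemma exp_lambda_cases:
  assumes "lam \<in> lambda_set"
  defines "e \<equiv> exp (\<i> * of_real lam)"
  shows "e = 1 \<or> e = -1 \<or> e = \<i> \<or> e = Complex (1/2) (sqrt 3 / 2) \<or> e = Complex (-1/2) (sqrt 3 / 2)"
    and "ord_lam lam = 4 \<Longrightarrow> e = \<i>"
    and "ord_lam lam \<in> {3, 6} \<Longrightarrow> Im e = sqrt 3 / 2"
proof -
  obtain m :: int where lam: "lam = pi * of_int m / 6"
    and m: "(m > 0 \<and> 6 dvd m) \<or> m mod 12 \<in> {2,3,4}"
    using assms(1) unfolding lambda_set_sixths by blast
  have ec: "e = Complex (cos (pi * of_int (m mod 12) / 6)) (sin (pi * of_int (m mod 12) / 6))"
    unfolding e_def lam by (subst exp_i_pi_sixth_mod) (rule exp_i_times)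
  have cases: "6 dvd m \<and> (e = 1 \<or> e = -1) \<or> m mod 12 = 3 \<and> e = \<i>
      \<or> m mod 12 = 2 \<and> e = Complex (1/2) (sqrt 3 / 2) \<or> m mod 12 = 4 \<and> e = Complex (-1/2) (sqrt 3 / 2)"
  proof -
    have "m mod 12 = 0 \<or> m mod 12 = 6 \<or> m mod 12 = 2 \<or> m mod 12 = 3 \<or> m mod 12 = 4"
      using m by auto presburger
    then consider "m mod 12 = 0" | "m mod 12 = 6" | "m mod 12 = 2" | "m mod 12 = 3" | "m mod 12 = 4"
      by blast
    thus ?thesis
    proof cases
      case 1
      hence "e = 1" "6 dvd m" using ec by (simp_all add: complex_eq_iff) presburger
      thus ?thesis by simp
    next
      case 2
      hence "e = -1" "6 dvd m" using ec by (simp_all add: complex_eq_iff) presburger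
      thus ?thesis by simp
    next
      case 3
      have "pi * of_int 2 / 6 = pi / 3" by simp
      thus ?thesis using ec 3 by (simp add: cos_60 sin_60)
    next
      case 4
      have "pi * of_int 3 / 6 = pi / 2" by simp
      thus ?thesis using ec 4 by (simp add: complex_eq_iff)
    next
      case 5
      have "pi * of_int 4 / 6 = 2 * pi / 3" by simp
      moreover have "sin (2 * pi / 3) = sqrt 3 / 2" using sin_120' by (simp add: mult.commute)
      ultimately show ?thesis using ec 5 cos_120 by simp
    qed
  qed
  thus "e = 1 \<or> e = -1 \<or> e = \<i> \<or> e = Complex (1/2) (sqrt 3 / 2) \<or> e = Complex (-1/2) (sqrt 3 / 2)"
    by blast
  have dvd: "(12::int) dvd (int (ord_lam lam) * m)" unfolding lam by (rule ord_lam_sixth_dvd)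
  have res: "m mod 12 = 2 \<or> m mod 12 = 3 \<or> m mod 12 = 4" if "ord_lam lam > 2"
    using ord_lam_sixth_le[of m] that lam cases by auto
  show "e = \<i>" if "ord_lam lam = 4"
  proof -
    have "m mod 12 = 3" using dvd res that by simp presburger
    moreover from this have "\<not> 6 dvd m" by presburger
    ultimately show ?thesis using cases by auto
  qed
  show "Im e = sqrt 3 / 2" if "ord_lam lam \<in> {3, 6}"
  proof -
    have "m mod 12 = 2 \<or> m mod 12 = 4" using dvd res that by auto presburger+
    moreover from this have "\<not> 6 dvd m" by presburger
    ultimately show ?thesis using cases by auto
  qed
qed

subsection \<open>Discrete subgroups of \<open>\<real>\<close> and the crystallographic restriction\<close>

lemma discrete_subgroup_real_cyclic:
  fixes G :: "real set"
  assumes add: "\<And>x y. x \<in> G \<Longrightarrow> y \<in> G \<Longrightarrow> x + y \<in> G"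
    and neg: "\<And>x. x \<in> G \<Longrightarrow> - x \<in> G"
    and eps: "\<epsilon> > 0" and disc: "\<And>x. x \<in> G \<Longrightarrow> \<bar>x\<bar> < \<epsilon> \<Longrightarrow> x = 0"
    and x0: "x0 \<in> G" "x0 > 0"
  obtains s where "s > 0" "s \<in> G" "G = {of_int k * s | k. True}"
proof -
  have zero: "0 \<in> G" using add[OF x0(1) neg[OF x0(1)]] by simp
  have mult: "of_int k * x \<in> G" if "x \<in> G" for x k
  proof (induction k rule: int_induct[where k = 0])
    case base show ?case using zero by simp
  next
    case (step1 i) thus ?case using add[OF step1(2) that] by (simp add: algebra_simps)
  next
    case (step2 i) thus ?case using add[OF step2(2) neg[OF that]] by (simp add: algebra_simps)
  qed
  define F where "F = {x \<in> G. 0 < x \<and> x \<le> x0}"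
  text \<open>Distinct points of \<open>G\<close> are \<open>\<epsilon>\<close> apart, so \<open>\<lfloor>x/\<epsilon>\<rfloor>\<close> is injective on \<open>F\<close>.\<close>
  have "inj_on (\<lambda>x. \<lfloor>x / \<epsilon>\<rfloor>) F"
  proof (rule inj_onI)
    fix x y assume x: "x \<in> F" and y: "y \<in> F" and e: "\<lfloor>x / \<epsilon>\<rfloor> = \<lfloor>y / \<epsilon>\<rfloor>"
    have "\<bar>x / \<epsilon> - y / \<epsilon>\<bar> < 1" using e by linarith
    hence "\<bar>x - y\<bar> < \<epsilon>" using eps by (simp add: diff_divide_distrib[symmetric] divide_less_eq)
    moreover have "x - y \<in> G" using add[of x "- y"] neg x y by (simp add: F_def)
    ultimately show "x = y" using disc by fastforce
  qed
  moreover have "(\<lambda>x. \<lfloor>x / \<epsilon>\<rfloor>) ` F \<subseteq> {0..\<lfloor>x0 / \<epsilon>\<rfloor>}"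
    using eps by (auto simp: F_def intro!: floor_mono divide_right_mono)
  ultimately have fin: "finite F" by (metis finite_atLeastAtMost_int finite_imageD finite_subset)
  have "F \<noteq> {}" using x0 by (auto simp: F_def)
  define s where "s = Min F"
  have sF: "s \<in> F" and smin: "\<And>y. y \<in> F \<Longrightarrow> s \<le> y"
    using Min_in[OF fin \<open>F \<noteq> {}\<close>] fin unfolding s_def by auto
  have s: "s > 0" "s \<in> G" using sF by (auto simp: F_def)
  have "G \<subseteq> {of_int k * s | k. True}"
  proof
    fix z assume z: "z \<in> G"
    define \<rho> where "\<rho> = z - of_int \<lfloor>z / s\<rfloor> * s"
    have "\<rho> \<in> G" unfolding \<rho>_def using add[OF z mult[OF s(2), of "- \<lfloor>z / s\<rfloor>"]] by simp
    moreover have "0 \<le> \<rho>" "\<rho> < s" unfolding \<rho>_def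
      using floor_divide_lower[OF s(1), of z] floor_divide_upper[OF s(1), of z]
      by (simp_all add: algebra_simps)
    ultimately have "\<rho> = 0" using smin sF by (force simp: F_def)
    thus "z \<in> {of_int k * s | k. True}" unfolding \<rho>_def by auto
  qed
  hence "G = {of_int k * s | k. True}" using mult[OF s(2)] by auto
  thus ?thesis using that s by blast
qed

text \<open>If \<open>2 cos t\<close> is an integer then \<open>cos (12 t) = 1\<close>, by doubling and tripling.\<close>
lemma two_cos_int_imp_sixth:
  fixes t :: real
  assumes "2 * cos t = of_int k"
  obtains n :: int where "t = pi * of_int n / 6"
proof -
  have "\<bar>(of_int k::real)\<bar> \<le> 2" using abs_cos_le_one[of t] assms by (simp flip: assms add: abs_mult)
  hence "k \<in> {-2, -1, 0, 1, 2}" by auto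
  hence "cos t \<in> {-1, -1/2, 0, 1/2, 1}" using assms by auto
  hence "cos (3 * t) \<in> {-1, 0, 1}"
    unfolding cos_treble_cos by (elim insertE emptyE) (simp_all only:, simp_all add: power3_eq_cube)
  hence "cos (6 * t) \<in> {-1, 1}" using cos_double_cos[of "3 * t"] by auto
  hence "cos (12 * t) = 1" using cos_double_cos[of "6 * t"] by auto
  then obtain n :: int where "12 * t = of_int n * 2 * pi" by (auto simp: cos_one_2pi_int)
  hence "t = pi * of_int n / 6" by (simp add: field_simps)
  thus ?thesis by (rule that)
qed

lemma two_cos_int_not_odd_sixth:
  assumes "2 * cos (pi * of_int m / 6) = of_int k"
  shows "m mod 6 \<noteq> 1 \<and> m mod 6 \<noteq> 5"
proof
  text \<open>For \<open>m \<equiv> \<plusminus>1 (mod 6)\<close> one has \<open>(2 cos (\<pi>m/6))\<^sup>2 = 3\<close>.\<close>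
  have cos_sq: "(cos (s + pi * of_int j))^2 = 3/4" if "(cos s)^2 = 3/4" for s j
    using that by (simp add: cos_add power2_eq_square)
  have c30: "(cos (pi / 6))^2 = 3/4" "(cos (- (pi / 6)))^2 = 3/4" by (simp_all add: cos_30 power_divide)
  have no_sqrt3: "(cos (pi * of_int m / 6))^2 \<noteq> 3/4"
  proof
    assume "(cos (pi * of_int m / 6))^2 = 3/4"
    hence "(of_int k :: real)^2 = 3" by (simp flip: assms add: power_mult_distrib)
    hence "k * k = 3" by (metis of_int_eq_iff of_int_numeral of_int_power power2_eq_square)
    moreover have "k * k \<noteq> 3" for k :: int
    proof (cases "\<bar>k\<bar> \<le> 1")
      case True
      hence "k \<in> {-1, 0, 1}" by auto
      thus ?thesis by auto
    next
      case False
      hence "2 * 2 \<le> \<bar>k\<bar> * \<bar>k\<bar>" by (intro mult_mono) auto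
      thus ?thesis by (simp add: abs_mult_self_eq)
    qed
    ultimately show False by blast
  qed
  show "m mod 6 \<noteq> 1"
  proof
    assume "m mod 6 = 1"
    hence "m = 6 * (m div 6) + 1" by presburger
    hence "real_of_int m = of_int (6 * (m div 6) + 1)" by (rule arg_cong[where f = real_of_int])
    hence "pi * of_int m / 6 = pi / 6 + pi * of_int (m div 6)" by (simp add: field_simps)
    hence "(cos (pi * of_int m / 6))^2 = 3/4" by (simp only: cos_sq[OF c30(1)])
    thus False using no_sqrt3 by blast
  qed
  show "m mod 6 \<noteq> 5"
  proof
    assume "m mod 6 = 5"
    hence "m = 6 * (m div 6 + 1) - 1" by presburger
    hence "real_of_int m = of_int (6 * (m div 6 + 1) - 1)" by (rule arg_cong[where f = real_of_int])
    hence "pi * of_int m / 6 = - (pi / 6) + pi * of_int (m div 6 + 1)" by (simp add: field_simps)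
    hence "(cos (pi * of_int m / 6))^2 = 3/4" by (simp only: cos_sq[OF c30(2)])
    thus False using no_sqrt3 by blast
  qed
qed

lemma lambda_set_or_uminus:
  assumes "m > 0" "m mod 6 \<noteq> 1" "m mod 6 \<noteq> 5"
  shows "pi * of_int m / 6 \<in> lambda_set \<or> - (pi * of_int m / 6) \<in> lambda_set"
proof -
  define r where "r = m mod 12"
  have "0 \<le> r" "r < 12" by (simp_all add: r_def)
  hence "r \<in> {0, 1, 2, 3, 4, 5, 6, 7, 8, 9, 10, 11}" by simp presburger
  moreover have "m mod 6 = r mod 6" "6 dvd m \<longleftrightarrow> r mod 6 = 0"
    "(- m) mod 12 = (if r = 0 then 0 else 12 - r)"
    unfolding r_def by (simp_all add: mod_mod_cancel zmod_zminus1_eq_if dvd_eq_mod_eq_0)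
  ultimately have "((m > 0 \<and> 6 dvd m) \<or> m mod 12 = 2 \<or> m mod 12 = 3 \<or> m mod 12 = 4)
    \<or> ((- m) mod 12 = 2 \<or> (- m) mod 12 = 3 \<or> (- m) mod 12 = 4)"
    using assms unfolding r_def[symmetric] by auto
  thus ?thesis
  proof
    assume "(m > 0 \<and> 6 dvd m) \<or> m mod 12 = 2 \<or> m mod 12 = 3 \<or> m mod 12 = 4"
    hence "pi * of_int m / 6 \<in> lambda_set" unfolding lambda_set_sixths by auto
    thus ?thesis ..
  next
    assume "(- m) mod 12 = 2 \<or> (- m) mod 12 = 3 \<or> (- m) mod 12 = 4"
    hence "pi * of_int (- m) / 6 \<in> lambda_set" unfolding lambda_set_sixths by blast
    thus ?thesis by simp
  qed
qed

subsection \<open>Structure of a lattice in \<open>Osc\<^sub>1\<close>\<close>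

lemma lattice_centre_discrete:
  assumes "osc_lattice L"
  obtains \<epsilon> where "\<epsilon> > 0" "\<And>z. (0, z, 0) \<in> L \<Longrightarrow> \<bar>z\<bar> < \<epsilon> \<Longrightarrow> z = 0"
proof -
  obtain U where U: "open U" "osc_one \<in> U" "L \<inter> U = {osc_one}"
    using assms by (auto simp: osc_lattice_def)
  have "open ((\<lambda>z::real. (0::complex, z, 0::real)) -` U)"
    by (rule open_vimage[OF U(1)]) (intro continuous_intros)
  moreover have "0 \<in> (\<lambda>z::real. (0::complex, z, 0::real)) -` U" using U(2) by (simp add: osc_one_def)
  ultimately obtain \<epsilon> where "\<epsilon> > 0" "ball 0 \<epsilon> \<subseteq> (\<lambda>z::real. (0::complex, z, 0::real)) -` U"
    using open_contains_ball_eq by blast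
  moreover have "z = 0" if "(0, z, 0) \<in> L" "(0, z, 0) \<in> U" for z
  proof -
    have "(0, z, 0) \<in> L \<inter> U" using that by blast
    thus ?thesis using U(3) by (simp add: osc_one_def)
  qed
  ultimately show ?thesis using that by (force simp: dist_real_def)
qed

lemma lattice_angle_nonzero:
  assumes "osc_lattice L"
  obtains d where "d \<in> L" "snd (snd d) > 0"
proof -
  obtain K where K: "compact K" "\<forall>g. \<exists>l\<in>L. \<exists>k\<in>K. g = osc_mult l k"
    using assms by (auto simp: osc_lattice_def)
  obtain B where B: "\<forall>k\<in>K. norm k \<le> B" using compact_imp_bounded[OF K(1)] by (auto simp: bounded_iff)
  obtain l k where lk: "l \<in> L" "k \<in> K" "(0, 0, B + 1) = osc_mult l k" using K(2) by blast
  have "norm (snd (snd k)) \<le> norm k"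
    using norm_snd_le[of "snd k" "fst k"] norm_snd_le[of "snd (snd k)" "fst (snd k)"] by simp
  hence "snd (snd k) < B + 1" using B lk(2) by force
  moreover have "B + 1 = snd (snd l) + snd (snd k)"
    using arg_cong[OF lk(3), of "\<lambda>g. snd (snd g)"] by (simp add: osc_angle_mult)
  ultimately show ?thesis using that lk(1) by simp
qed

lemma proj_H_lift: "x \<in> fst ` (L \<inter> Hset) \<Longrightarrow> \<exists>z. (x, z, 0) \<in> L"
  by (auto simp: Hset_def)

lemma conj_rotates_proj:
  assumes L: "osc_subgroup L" and d: "d \<in> L" and x: "x \<in> fst ` (L \<inter> Hset)"
  shows "exp (\<i> * of_real (snd (snd d))) * x \<in> fst ` (L \<inter> Hset)"
proof -
  obtain z where "(x, z, 0) \<in> L" using proj_H_lift[OF x] by blast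
  hence "osc_conj d (x, z, 0) \<in> L \<inter> Hset"
    using osc_conj_in[OF L d] osc_conj_H(2) by (simp add: Hset_def)
  thus ?thesis using osc_conj_H(1) by (metis image_eqI)
qed

text \<open>Rotation by the angle of \<open>d\<close> preserves a unimodular lattice, so its trace is an integer.\<close>
lemma two_cos_angle_int:
  assumes L: "osc_subgroup L" and uv: "\<bar>wedge u v\<bar> = 1" and proj: "fst ` (L \<inter> Hset) = zspan u v"
    and d: "d \<in> L"
  obtains k :: int where "2 * cos (snd (snd d)) = of_int k"
proof -
  define e where "e = exp (\<i> * of_real (snd (snd d)))"
  have eu: "e * u \<in> zspan u v" and ev: "e * v \<in> zspan u v"
    using conj_rotates_proj[OF L d, of u] conj_rotates_proj[OF L d, of v]
    by (simp_all add: proj zspan_left zspan_right e_def)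
  obtain k1 k2 where "wedge (e * u) v = of_int k1" "wedge u (e * v) = of_int k2"
    using wedge_zspan_int[OF uv eu zspan_right] wedge_zspan_int[OF uv zspan_left ev] by blast
  hence "2 * cos (snd (snd d)) * wedge u v = of_int (k1 + k2)"
    using wedge_trace[of e u v] by (simp add: e_def Re_exp)
  moreover have "wedge u v = 1 \<or> wedge u v = -1" using uv by auto
  ultimately have "2 * cos (snd (snd d)) = of_int (k1 + k2) \<or> 2 * cos (snd (snd d)) = of_int (- (k1 + k2))"
    by auto
  thus ?thesis using that by blast
qed

lemma lattice_centre_structure:
  assumes lat: "osc_lattice L" and uv: "\<bar>wedge u v\<bar> = 1" and proj: "fst ` (L \<inter> Hset) = zspan u v"
  obtains r :: nat where "0 < r" "\<And>z. (0, z, 0) \<in> L \<longleftrightarrow> (\<exists>c::int. z = of_int c / real r)"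
proof -
  have L: "osc_subgroup L" using lat by (simp add: osc_lattice_def)
  define Z where "Z = {z. (0::complex, z, 0::real) \<in> L}"
  have add: "x + y \<in> Z" if "x \<in> Z" "y \<in> Z" for x y
    using osc_subgroupD(2)[OF L, of "(0, x, 0)" "(0, y, 0)"] that by (simp add: Z_def osc_mult_H)
  have neg: "- x \<in> Z" if "x \<in> Z" for x
    using osc_subgroupD(3)[OF L, of "(0, x, 0)"] that by (simp add: Z_def osc_inv_H)
  obtain zu zv where "(u, zu, 0) \<in> L" "(v, zv, 0) \<in> L"
    using proj_H_lift[of u L] proj_H_lift[of v L] by (auto simp: proj zspan_left zspan_right)
  hence "osc_comm (u, zu, 0) (v, zv, 0) \<in> L" unfolding osc_comm_def by (simp add: osc_subgroupD[OF L])
  hence w: "wedge u v \<in> Z" by (simp add: osc_comm_H Z_def)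
  have one: "1 \<in> Z"
  proof (cases "wedge u v = 1")
    case True thus ?thesis using w by simp
  next
    case False hence "wedge u v = -1" using uv by auto
    thus ?thesis using neg[OF w] by simp
  qed
  obtain \<epsilon> where \<epsilon>: "\<epsilon> > 0" "\<And>z. (0, z, 0) \<in> L \<Longrightarrow> \<bar>z\<bar> < \<epsilon> \<Longrightarrow> z = 0"
    using lattice_centre_discrete[OF lat] by blast
  have disc: "x = 0" if "x \<in> Z" "\<bar>x\<bar> < \<epsilon>" for x using \<epsilon>(2) that by (simp add: Z_def)
  obtain s where s: "s > 0" "Z = {of_int k * s | k. True}"
    using discrete_subgroup_real_cyclic[OF add neg \<epsilon>(1) disc one zero_less_one] by blast
  have "1 \<in> {of_int k * s | k. True}" using one s(2) by simp
  then obtain k :: int where k: "1 = of_int k * s" by blast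
  hence "0 < of_int k * s" by simp
  hence kpos: "k > 0" using s(1) by (simp add: zero_less_mult_iff)
  hence sk: "s = 1 / real (nat k)" using k by (simp add: eq_divide_eq mult.commute)
  have eq: "(0, z, 0) \<in> L \<longleftrightarrow> (\<exists>c::int. z = of_int c / real (nat k))" for z
  proof -
    have "(0, z, 0) \<in> L \<longleftrightarrow> (\<exists>c::int. z = of_int c * s)" using s(2) by (simp add: Z_def set_eq_iff)
    thus ?thesis by (simp add: sk)
  qed
  show ?thesis by (rule that[of "nat k"]) (use kpos eq in auto)
qed

lemma lattice_angle_structure:
  assumes lat: "osc_lattice L" and uv: "\<bar>wedge u v\<bar> = 1" and proj: "fst ` (L \<inter> Hset) = zspan u v"
  obtains lam where "lam \<in> lambda_set" "(\<lambda>g. snd (snd g)) ` L = {of_int k * lam | k. True}"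
proof -
  have L: "osc_subgroup L" using lat by (simp add: osc_lattice_def)
  define T where "T = (\<lambda>g. snd (snd g)) ` L"
  have add: "x + y \<in> T" if xy: "x \<in> T" "y \<in> T" for x y
  proof -
    obtain g h where "g \<in> L" "h \<in> L" "x = snd (snd g)" "y = snd (snd h)" using xy unfolding T_def by blast
    hence "x + y = snd (snd (osc_mult g h))" "osc_mult g h \<in> L"
      by (simp_all add: osc_angle_mult osc_subgroupD[OF L])
    thus ?thesis unfolding T_def by (rule image_eqI)
  qed
  have neg: "- x \<in> T" if x: "x \<in> T" for x
  proof -
    obtain g where "g \<in> L" "x = snd (snd g)" using x unfolding T_def by blast
    hence "- x = snd (snd (osc_inv g))" "osc_inv g \<in> L" by (simp_all add: osc_angle_inv osc_subgroupD[OF L])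
    thus ?thesis unfolding T_def by (rule image_eqI)
  qed
  have two_cos: "\<exists>k::int. 2 * cos t = of_int k" if "t \<in> T" for t
  proof -
    obtain d where d: "d \<in> L" "t = snd (snd d)" using \<open>t \<in> T\<close> unfolding T_def by blast
    obtain k where "2 * cos (snd (snd d)) = of_int k" by (rule two_cos_angle_int[OF L uv proj d(1)])
    thus ?thesis using d(2) by blast
  qed
  have sixth: "\<exists>n::int. t = pi * of_int n / 6" if t: "t \<in> T" for t
  proof -
    obtain k where "2 * cos t = of_int k" using two_cos[OF t] by blast
    then obtain n where "t = pi * of_int n / 6" by (rule two_cos_int_imp_sixth)
    thus ?thesis by blast
  qed
  have disc: "x = 0" if x: "x \<in> T" "\<bar>x\<bar> < pi / 6" for x
  proof -
    obtain n :: int where n: "x = pi * of_int n / 6" using sixth[OF x(1)] by blast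
    hence "\<bar>x\<bar> = \<bar>of_int n\<bar> * (pi / 6)" unfolding n by (simp add: abs_mult)
    hence "\<bar>of_int n\<bar> * (pi / 6) < 1 * (pi / 6)" using x(2) by simp
    hence "\<bar>(of_int n::real)\<bar> < 1" by (rule mult_right_less_imp_less) simp
    hence "n = 0" by linarith
    thus ?thesis unfolding n by simp
  qed
  obtain d where d: "d \<in> L" "snd (snd d) > 0" using lattice_angle_nonzero[OF lat] by blast
  have "snd (snd d) \<in> T" unfolding T_def using d(1) by (rule imageI)
  moreover have "pi / 6 > 0" by simp
  ultimately obtain s where s: "s > 0" "s \<in> T" and T: "T = {of_int k * s | k. True}"
    using discrete_subgroup_real_cyclic[OF add neg _ disc _ d(2)] by blast
  obtain m :: int where m: "s = pi * of_int m / 6" using sixth[OF s(2)] by blast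
  have "m > 0" using s(1) m by (simp add: zero_less_mult_iff)
  moreover have "m mod 6 \<noteq> 1 \<and> m mod 6 \<noteq> 5"
    using two_cos[OF s(2)] two_cos_int_not_odd_sixth unfolding m by blast
  ultimately consider "s \<in> lambda_set" | "- s \<in> lambda_set" using lambda_set_or_uminus m by blast
  thus ?thesis
  proof cases
    case 1 show ?thesis by (rule that[OF 1]) (use T in \<open>simp add: T_def\<close>)
  next
    case 2
    have "{of_int k * s | k. True} = {of_int k * (- s) | k::int. True}"
    proof (intro equalityI subsetI)
      fix x assume "x \<in> {of_int k * s | k. True}"
      then obtain k :: int where "x = of_int (- k) * (- s)" by auto
      thus "x \<in> {of_int k * (- s) | k. True}" by blast
    next
      fix x assume "x \<in> {of_int k * (- s) | k. True}"
      then obtain k :: int where "x = of_int (- k) * s" by auto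
      thus "x \<in> {of_int k * s | k. True}" by blast
    qed
    show ?thesis by (rule that[OF 2]) (use T \<open>{of_int k * s | k. True} = _\<close> in \<open>simp add: T_def\<close>)
  qed
qed

subsection \<open>Rotations of \<open>Osc\<^sub>1\<close>\<close>

definition rotm :: "complex \<Rightarrow> real^2^2" where
  "rotm c = vector [vector [Re c, - Im c], vector [Im c, Re c]]"

definition osc_rot :: "complex \<Rightarrow> osc \<Rightarrow> osc" where
  "osc_rot c g = (c * fst g, snd g)"

lemma rotm_SO2:
  assumes "cmod c = 1"
  shows "rotm c \<in> SO2"
proof -
  have n: "Re c * Re c + Im c * Im c = 1" using assms by (simp add: cmod_def power2_eq_square)
  have "transpose (rotm c) ** rotm c = mat 1"
    by (simp add: vec_eq_iff forall_2 matrix_matrix_mult_def transpose_def mat_def sum_2 rotm_def n)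
  hence "orthogonal_matrix (rotm c)" by (simp add: orthogonal_matrix)
  moreover have "det (rotm c) = 1" using n by (simp add: det_2 rotm_def power2_eq_square)
  ultimately show ?thesis by (simp add: SO2_def)
qed

lemma F_S_rotm: "F_S (rotm c) = osc_rot c"
proof
  fix g :: osc
  have "rot (rotm c) x = c * x" for x
    by (simp add: rot_def matrix_vector_mult_def sum_2 rotm_def complex_eq_iff)
  thus "F_S (rotm c) g = osc_rot c g" by (cases g) (simp add: F_S_def osc_rot_def)
qed

lemma osc_rot_simps [simp]:
  "osc_rot c (x, z, t) = (c * x, z, t)" "fst (osc_rot c g) = c * fst g" "snd (osc_rot c g) = snd g"
  by (simp_all add: osc_rot_def)

lemma osc_rot_mult:
  assumes "cmod c = 1"
  shows "osc_rot c (osc_mult g h) = osc_mult (osc_rot c g) (osc_rot c h)"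
proof -
  obtain x1 z1 t1 x2 z2 t2 where g: "g = (x1, z1, t1)" and h: "h = (x2, z2, t2)"
    by (cases g, cases h) auto
  have "wedge (c * x1) (exp (\<i> * of_real t1) * (c * x2)) = wedge x1 (exp (\<i> * of_real t1) * x2)"
    using wedge_mult_unit[OF assms, of x1 "exp (\<i> * of_real t1) * x2"] by (simp add: ac_simps)
  thus ?thesis by (simp add: g h osc_mult_eq algebra_simps)
qed

lemma osc_rot_inv: "osc_rot c (osc_inv g) = osc_inv (osc_rot c g)"
  by (cases g) (simp add: osc_inv_eq algebra_simps)

lemma osc_rot_cnj: "cmod c = 1 \<Longrightarrow> osc_rot (cnj c) (osc_rot c g) = g"
  using complex_norm_square[of c] by (simp add: osc_rot_def mult.assoc[symmetric] mult.commute)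

lemma osc_subgroup_osc_rot_image:
  assumes c: "cmod c = 1" and L: "osc_subgroup L"
  shows "osc_subgroup (osc_rot c ` L)"
  unfolding osc_subgroup_def
proof (intro conjI ballI)
  show "osc_one \<in> osc_rot c ` L" using osc_subgroupD(1)[OF L] image_eqI[of osc_one "osc_rot c" osc_one]
    by (simp add: osc_one_def)
  fix x y assume "x \<in> osc_rot c ` L" "y \<in> osc_rot c ` L"
  then obtain g h where gh: "g \<in> L" "h \<in> L" and "x = osc_rot c g" "y = osc_rot c h" by blast
  hence "osc_mult x y = osc_rot c (osc_mult g h)" "osc_inv x = osc_rot c (osc_inv g)"
    by (simp_all add: osc_rot_mult[OF c] osc_rot_inv)
  thus "osc_mult x y \<in> osc_rot c ` L" "osc_inv x \<in> osc_rot c ` L"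
    using osc_subgroupD(2,3)[OF L] gh by auto
qed

lemma osc_rot_image_Hset: "osc_rot c ` L \<inter> Hset = osc_rot c ` (L \<inter> Hset)"
  by (auto simp: Hset_def)

lemma proj_osc_rot_image: "fst ` (osc_rot c ` L \<inter> Hset) = (\<lambda>x. c * x) ` fst ` (L \<inter> Hset)"
  unfolding osc_rot_image_Hset by (simp add: image_image)

lemma angles_osc_rot_image: "(\<lambda>g. snd (snd g)) ` osc_rot c ` L = (\<lambda>g. snd (snd g)) ` L"
  by (simp add: image_image)

lemma centre_osc_rot_image:
  assumes "c \<noteq> 0"
  shows "(0, z, 0) \<in> osc_rot c ` L \<longleftrightarrow> (0, z, 0) \<in> L"
  using assms by (force simp: osc_rot_def image_iff)

lemma lambda_of_osc_rot_image: "lambda_of (osc_rot c ` L) = lambda_of L"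
  by (simp only: lambda_of_def angles_osc_rot_image)

lemma r_of_osc_rot_image:
  assumes c: "cmod c = 1"
  shows "r_of (osc_rot c ` L) = r_of L"
proof -
  text \<open>Precomposition with the rotation transports Heisenberg parametrisations in both directions.\<close>
  have transfer: "bij_betw (f \<circ> osc_rot d) (M \<inter> Hset) UNIV \<and>
      (\<forall>x\<in>M \<inter> Hset. \<forall>y\<in>M \<inter> Hset. (f \<circ> osc_rot d) (osc_mult x y) = heis_mult r ((f \<circ> osc_rot d) x) ((f \<circ> osc_rot d) y))"
    if d: "cmod d = 1" and f: "bij_betw f (osc_rot d ` M \<inter> Hset) UNIV"
      and hom: "\<forall>x\<in>osc_rot d ` M \<inter> Hset. \<forall>y\<in>osc_rot d ` M \<inter> Hset. f (osc_mult x y) = heis_mult r (f x) (f y)"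
    for d M f r
  proof
    have "inj (osc_rot d)" using osc_rot_cnj[OF d] by (metis injI)
    hence "bij_betw (osc_rot d) (M \<inter> Hset) (osc_rot d ` M \<inter> Hset)"
      unfolding osc_rot_image_Hset by (simp add: bij_betw_imageI inj_on_subset)
    thus "bij_betw (f \<circ> osc_rot d) (M \<inter> Hset) UNIV" using f by (rule bij_betw_trans)
    show "\<forall>x\<in>M \<inter> Hset. \<forall>y\<in>M \<inter> Hset. (f \<circ> osc_rot d) (osc_mult x y) = heis_mult r ((f \<circ> osc_rot d) x) ((f \<circ> osc_rot d) y)"
      using hom osc_rot_mult[OF d] unfolding osc_rot_image_Hset by simp
  qed
  have cancel: "osc_rot (cnj c) ` osc_rot c ` L = L"
    using osc_rot_cnj[OF c] by (simp add: image_image)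
  have c': "cmod (cnj c) = 1" using c by simp
  have "(\<exists>f. bij_betw f (osc_rot c ` L \<inter> Hset) UNIV \<and>
      (\<forall>x\<in>osc_rot c ` L \<inter> Hset. \<forall>y\<in>osc_rot c ` L \<inter> Hset. f (osc_mult x y) = heis_mult r (f x) (f y)))
    \<longleftrightarrow> (\<exists>f. bij_betw f (L \<inter> Hset) UNIV \<and>
      (\<forall>x\<in>L \<inter> Hset. \<forall>y\<in>L \<inter> Hset. f (osc_mult x y) = heis_mult r (f x) (f y)))" for r
    using transfer[OF c, where M = L] transfer[OF c', where M = "osc_rot c ` L"] unfolding cancel by blast
  thus ?thesis by (simp add: r_of_def)
qed

subsection \<open>The fundamental domain \<open>\<F>\<close>\<close>

lemma sqrt3_bounds: "sqrt 3 * sqrt 3 = (3::real)" "(1::real) < sqrt 3"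
  by (simp_all add: real_less_rsqrt)

lemma Fdom_bounds:
  assumes "(\<mu>, \<nu>) \<in> Fdom"
  shows "\<nu> > 0" "\<bar>\<mu>\<bar> \<le> 1/2" "\<nu> \<ge> sqrt 3 / 2" "\<mu>^2 + \<nu>^2 \<ge> 1"
proof -
  show \<nu>: "\<nu> > 0" and \<mu>: "\<bar>\<mu>\<bar> \<le> 1/2" and n: "\<mu>^2 + \<nu>^2 \<ge> 1" using assms by (auto simp: Fdom_def)
  have "\<bar>\<mu>\<bar>^2 \<le> (1/2)^2" using \<mu> by (intro power_mono) auto
  hence "\<mu>^2 \<le> (1/2)^2" by simp
  hence "\<nu>^2 \<ge> 3/4" using n by (simp add: power_divide)
  hence "sqrt (3/4) \<le> sqrt (\<nu>^2)" by (subst real_sqrt_le_iff) simp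
  thus "\<nu> \<ge> sqrt 3 / 2" using \<nu> by (simp add: real_sqrt_divide)
qed

lemma Fdom_int_mult_imag:
  assumes F: "(\<mu>, \<nu>) \<in> Fdom" and t: "of_int t * \<nu> = y" and y: "0 < y" "y < sqrt 3"
  shows "t = 1"
proof -
  have "0 < of_int t * \<nu>" using t y(1) by simp
  hence "t > 0" using Fdom_bounds(1)[OF F] by (simp add: zero_less_mult_iff)
  moreover have "t < 2"
  proof (rule ccontr)
    assume "\<not> t < 2"
    hence "of_int t * \<nu> \<ge> 2 * (sqrt 3 / 2)"
      using Fdom_bounds(3)[OF F] by (intro mult_mono) auto
    thus False using t y(2) by simp
  qed
  ultimately show ?thesis by simp
qed

lemma Fdom_square:
  assumes F: "(\<mu>, \<nu>) \<in> Fdom" and e: "\<i> = of_int s + of_int t * Complex (- \<mu>) \<nu>"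
  shows "\<mu> = 0 \<and> \<nu> = 1"
proof -
  have im: "of_int t * \<nu> = 1" and re: "of_int s = of_int t * \<mu>"
    using arg_cong[OF e, of Im] arg_cong[OF e, of Re] by simp_all
  from im have "t = 1" by (rule Fdom_int_mult_imag[OF F]) (use sqrt3_bounds in auto)
  hence "\<nu> = 1" "\<bar>(of_int s :: real)\<bar> \<le> 1/2" using im re Fdom_bounds(2)[OF F] by simp_all
  moreover from this(2) have "s = 0" by linarith
  ultimately show ?thesis using re \<open>t = 1\<close> by simp
qed

lemma Fdom_hexagonal:
  assumes F: "(\<mu>, \<nu>) \<in> Fdom" and e: "e = of_int s + of_int t * Complex (- \<mu>) \<nu>"
    and im: "Im e = sqrt 3 / 2"
  shows "\<mu> = 1/2 \<and> \<nu> = sqrt 3 / 2"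
proof -
  have "of_int t * \<nu> = sqrt 3 / 2" using e im by simp
  hence "t = 1" by (rule Fdom_int_mult_imag[OF F]) (use sqrt3_bounds in auto)
  hence \<nu>: "\<nu> = sqrt 3 / 2" using \<open>of_int t * \<nu> = sqrt 3 / 2\<close> by simp
  hence \<nu>2: "\<nu>^2 = 3/4" unfolding \<nu> by (simp add: power_divide)
  have "\<mu> = 1/2"
  proof (cases "\<mu> \<ge> 0")
    case True
    have "\<mu> \<ge> 1/2"
    proof (rule ccontr)
      assume "\<not> \<mu> \<ge> 1/2"
      hence "\<mu> * \<mu> < 1/2 * (1/2)" using True by (intro mult_strict_mono') auto
      thus False using Fdom_bounds(4)[OF F] \<nu>2 by (simp add: power2_eq_square)
    qed
    thus ?thesis using Fdom_bounds(2)[OF F] by simp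
  next
    case False
    hence "- 1/2 < \<mu>" "\<mu>^2 + \<nu>^2 > 1" using F by (auto simp: Fdom_def)
    moreover have "(- \<mu>) * (- \<mu>) < 1/2 * (1/2)" using False calculation(1) by (intro mult_strict_mono') auto
    ultimately show ?thesis using \<nu>2 by (simp add: power2_eq_square)
  qed
  thus ?thesis using \<nu> by simp
qed

lemma allowed_matrix_exists:
  assumes b: "b = a * w"
    and cases: "e = 1 \<or> e = -1 \<or> (e = \<i> \<and> w = \<i>)
      \<or> (e = Complex (1/2) (sqrt 3 / 2) \<and> w = Complex (-1/2) (sqrt 3 / 2))
      \<or> (e = Complex (-1/2) (sqrt 3 / 2) \<and> w = Complex (-1/2) (sqrt 3 / 2))"
  obtains m11 m12 m21 m22 where "(m11, m12, m21, m22) \<in> allowed_mats"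
    "e * a = of_int m11 * a + of_int m21 * b" "e * b = of_int m12 * a + of_int m22 * b"
proof -
  from cases consider "e = 1" | "e = -1" | "e = \<i>" "w = \<i>"
    | "e = Complex (1/2) (sqrt 3 / 2)" "w = Complex (-1/2) (sqrt 3 / 2)"
    | "e = Complex (-1/2) (sqrt 3 / 2)" "w = Complex (-1/2) (sqrt 3 / 2)" by blast
  thus ?thesis
  proof cases
    case 1 thus ?thesis using that[of 1 0 0 1] by (simp add: allowed_mats_def)
  next
    case 2 thus ?thesis using that[of "-1" 0 0 "-1"] by (simp add: allowed_mats_def)
  next
    case 3 thus ?thesis using that[of 0 "-1" 1 0] b by (simp add: allowed_mats_def algebra_simps)
  next
    case 4
    have "e = 1 + w" "e * w = -1" unfolding 4 using sqrt3_bounds by (simp_all add: complex_eq_iff)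
    thus ?thesis using that[of 1 "-1" 1 0] b by (simp add: allowed_mats_def algebra_simps)
  next
    case 5
    have "e = w" "e * w = -1 - w" unfolding 5 using sqrt3_bounds by (simp_all add: complex_eq_iff)
    have "e * b = a * (e * w)" using b by (simp add: ac_simps)
    also have "\<dots> = - a - b" by (simp only: \<open>e * w = -1 - w\<close> b) (simp add: algebra_simps)
    finally have "e * b = - a - b" .
    thus ?thesis using that[of 0 "-1" 1 "-1"] b \<open>e = w\<close> by (simp add: allowed_mats_def algebra_simps)
  qed
qed

lemma rotate_reduced_basis:
  assumes ab: "wedge a (a * Complex (- \<mu>) \<nu>) = 1" and \<nu>: "\<nu> > 0"
  obtains c where "cmod c = 1" "c * a = complex_of_real (1 / sqrt \<nu>)"
    "c * (a * Complex (- \<mu>) \<nu>) = Complex (- \<mu> / sqrt \<nu>) (sqrt \<nu>)"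
proof
  have a0: "a \<noteq> 0" using ab by auto
  have caa: "cnj a * a = complex_of_real ((cmod a)^2)"
    using complex_norm_square[of a] by (simp add: mult.commute)
  have "wedge a (a * Complex (- \<mu>) \<nu>) = Im ((cnj a * a) * Complex (- \<mu>) \<nu>)"
    by (simp add: wedge_def mult.assoc)
  hence "(cmod a)^2 * \<nu> = 1" using ab unfolding caa by simp
  hence "(cmod a)^2 = (1 / sqrt \<nu>)^2" using \<nu> by (simp add: field_simps power_divide)
  hence norm_a: "cmod a = 1 / sqrt \<nu>" using \<nu> by (simp add: power2_eq_iff_nonneg)
  define c where "c = cnj a / complex_of_real (cmod a)"
  show "cmod c = 1" using a0 by (simp add: c_def norm_divide)
  have "c * a = (cnj a * a) / complex_of_real (cmod a)" by (simp add: c_def)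
  also have "\<dots> = complex_of_real ((cmod a)^2) / complex_of_real (cmod a)" by (simp only: caa)
  also have "\<dots> = complex_of_real (cmod a)" using a0 by (simp add: power2_eq_square)
  finally show ca: "c * a = complex_of_real (1 / sqrt \<nu>)" by (simp only: norm_a)
  have "\<nu> / sqrt \<nu> = sqrt \<nu>" using \<nu> by (simp add: real_div_sqrt)
  thus "c * (a * Complex (- \<mu>) \<nu>) = Complex (- \<mu> / sqrt \<nu>) (sqrt \<nu>)"
    by (simp add: mult.assoc[symmetric] ca complex_eq_iff)
qed

lemma reduced_basis_rotation:
  assumes lam: "lam \<in> lambda_set" and F: "(\<mu>, \<nu>) \<in> Fdom" and a: "a \<noteq> 0"
  defines "e \<equiv> exp (\<i> * of_real lam)" and "b \<equiv> a * Complex (- \<mu>) \<nu>"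
  assumes rot: "e * a \<in> zspan a b"
  shows "ord_lam lam = 4 \<Longrightarrow> Complex \<mu> \<nu> = \<i>"
    and "ord_lam lam \<in> {3, 6} \<Longrightarrow> Complex \<mu> \<nu> = exp (\<i> * of_real (pi / 3))"
    and "\<exists>m11 m12 m21 m22. (m11, m12, m21, m22) \<in> allowed_mats
           \<and> e * a = of_int m11 * a + of_int m21 * b \<and> e * b = of_int m12 * a + of_int m22 * b"
proof -
  obtain s t where "e * a = of_int s * a + of_int t * b" using rot unfolding zspan_def by blast
  hence "e * a = (of_int s + of_int t * Complex (- \<mu>) \<nu>) * a" by (simp add: b_def algebra_simps)
  hence e: "e = of_int s + of_int t * Complex (- \<mu>) \<nu>" using a by (simp only: mult_cancel_right) simp
  have square: "\<mu> = 0 \<and> \<nu> = 1" if "e = \<i>"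
    using Fdom_square[OF F, of s t] e that by simp
  have hexagonal: "\<mu> = 1/2 \<and> \<nu> = sqrt 3 / 2" if "Im e = sqrt 3 / 2"
    by (rule Fdom_hexagonal[OF F e that])
  show "Complex \<mu> \<nu> = \<i>" if "ord_lam lam = 4"
  proof -
    have "\<mu> = 0 \<and> \<nu> = 1" by (rule square) (use exp_lambda_cases(2)[OF lam that] in \<open>simp add: e_def\<close>)
    thus ?thesis by (simp add: complex_eq_iff)
  qed
  show "Complex \<mu> \<nu> = exp (\<i> * of_real (pi / 3))" if "ord_lam lam \<in> {3, 6}"
  proof -
    have "exp (\<i> * of_real (pi / 3)) = Complex (1/2) (sqrt 3 / 2)"
      by (simp only: exp_i_times) (simp add: cos_60 sin_60)
    moreover have "\<mu> = 1/2 \<and> \<nu> = sqrt 3 / 2"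
      by (rule hexagonal) (use exp_lambda_cases(3)[OF lam that] in \<open>simp add: e_def\<close>)
    ultimately show ?thesis by simp
  qed
  have "e = 1 \<or> e = -1 \<or> (e = \<i> \<and> Complex (- \<mu>) \<nu> = \<i>)
      \<or> (e = Complex (1/2) (sqrt 3 / 2) \<and> Complex (- \<mu>) \<nu> = Complex (-1/2) (sqrt 3 / 2))
      \<or> (e = Complex (-1/2) (sqrt 3 / 2) \<and> Complex (- \<mu>) \<nu> = Complex (-1/2) (sqrt 3 / 2))"
  proof -
    consider "e = 1" | "e = -1" | "e = \<i>" | "e = Complex (1/2) (sqrt 3 / 2)" | "e = Complex (-1/2) (sqrt 3 / 2)"
      using exp_lambda_cases(1)[OF lam] unfolding e_def by blast
    thus ?thesis
    proof cases
      case 3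
      hence "\<mu> = 0 \<and> \<nu> = 1" by (rule square)
      thus ?thesis using 3 by (simp add: complex_eq_iff)
    next
      case 4
      hence "\<mu> = 1/2 \<and> \<nu> = sqrt 3 / 2" by (intro hexagonal) simp
      thus ?thesis using 4 by (simp add: complex_eq_iff)
    next
      case 5
      hence "\<mu> = 1/2 \<and> \<nu> = sqrt 3 / 2" by (intro hexagonal) simp
      thus ?thesis using 5 by (simp add: complex_eq_iff)
    next
      case 1 thus ?thesis by simp
    next
      case 2 thus ?thesis by simp
    qed
  qed
  then obtain m11 m12 m21 m22 where "(m11, m12, m21, m22) \<in> allowed_mats"
    "e * a = of_int m11 * a + of_int m21 * b" "e * b = of_int m12 * a + of_int m22 * b"
    by (rule allowed_matrix_exists[OF b_def[THEN meta_eq_to_obj_eq]])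
  thus "\<exists>m11 m12 m21 m22. (m11, m12, m21, m22) \<in> allowed_mats
           \<and> e * a = of_int m11 * a + of_int m21 * b \<and> e * b = of_int m12 * a + of_int m22 * b"
    by blast
qed

lemma (in heis_frame) reduced_frame_adapted:
  assumes F: "(\<mu>, \<nu>) \<in> Fdom"
    and a: "a = complex_of_real (1 / sqrt \<nu>)" and b: "b = Complex (- \<mu> / sqrt \<nu>) (sqrt \<nu>)"
    and lam: "lambda_of L \<in> lambda_set"
    and angles: "(\<lambda>g. snd (snd g)) ` L = {of_int k * lambda_of L | k. True}"
  shows "ord_lam (lambda_of L) = 4 \<Longrightarrow> Complex \<mu> \<nu> = \<i>"
    and "ord_lam (lambda_of L) \<in> {3, 6} \<Longrightarrow> Complex \<mu> \<nu> = exp (\<i> * of_real (pi / 3))"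
    and "d \<in> L \<Longrightarrow> snd (snd d) = lambda_of L \<Longrightarrow> adapted L \<alpha> \<beta> \<gamma> d"
    and "\<exists>\<delta>. osc_gen {\<alpha>, \<beta>, \<gamma>, \<delta>} = L"
proof -
  have \<nu>: "\<nu> > 0" by (rule Fdom_bounds(1)[OF F])
  hence bw: "b = a * Complex (- \<mu>) \<nu>" unfolding a b by (simp add: complex_eq_iff real_div_sqrt)
  have a0: "a \<noteq> 0" using \<nu> by (simp add: a)
  have "lambda_of L = of_int 1 * lambda_of L" by simp
  hence "lambda_of L \<in> (\<lambda>g. snd (snd g)) ` L" unfolding angles by blast
  then obtain d0 where "lambda_of L = snd (snd d0)" "d0 \<in> L" by (rule imageE)
  hence d0: "d0 \<in> L" "snd (snd d0) = lambda_of L" by simp_all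
  have "exp (\<i> * of_real (lambda_of L)) * a \<in> zspan a (a * Complex (- \<mu>) \<nu>)"
    using conj_rotates_proj[OF subgroup d0(1), of a] d0(2) by (simp add: proj bw zspan_left)
  note rotation = reduced_basis_rotation[OF lam F a0 this, folded bw]
  show "ord_lam (lambda_of L) = 4 \<Longrightarrow> Complex \<mu> \<nu> = \<i>"
    and "ord_lam (lambda_of L) \<in> {3, 6} \<Longrightarrow> Complex \<mu> \<nu> = exp (\<i> * of_real (pi / 3))"
    by (fact rotation(1,2))+
  from rotation(3) obtain m11 m12 m21 m22 where M: "(m11, m12, m21, m22) \<in> allowed_mats"
    and e: "exp (\<i> * of_real (lambda_of L)) * a = of_int m11 * a + of_int m21 * b"
      "exp (\<i> * of_real (lambda_of L)) * b = of_int m12 * a + of_int m22 * b"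
    by blast
  show adapted: "adapted L \<alpha> \<beta> \<gamma> d" if "d \<in> L" "snd (snd d) = lambda_of L" for d
    by (rule adapted_frame[OF angles that M e])
  show "\<exists>\<delta>. osc_gen {\<alpha>, \<beta>, \<gamma>, \<delta>} = L"
    using adapted[OF d0] unfolding adapted_def by blast
qed

lemma normalised_lattice_reduced_frame:
  assumes lat: "osc_lattice L" and "normalised L"
  obtains c \<mu> \<nu> za zb where "cmod c = 1" "(\<mu>, \<nu>) \<in> Fdom"
    "heis_frame (osc_rot c ` L) (complex_of_real (1 / sqrt \<nu>)) (Complex (- \<mu> / sqrt \<nu>) (sqrt \<nu>)) za zb (r_of L)"
    "lambda_of L \<in> lambda_set" "(\<lambda>g. snd (snd g)) ` osc_rot c ` L = {of_int k * lambda_of L | k. True}"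
proof -
  have L: "osc_subgroup L" using lat by (simp add: osc_lattice_def)
  obtain u v where proj: "fst ` (L \<inter> Hset) = zspan u v" and uv: "\<bar>wedge u v\<bar> = 1"
    using assms(2) unfolding normalised_def zspan_def wedge_def by (elim exE conjE) blast
  obtain r where r: "0 < r" and centre: "\<And>z. (0, z, 0) \<in> L \<longleftrightarrow> (\<exists>c::int. z = of_int c / real r)"
    by (rule lattice_centre_structure[OF lat uv proj]) blast
  obtain lam where lam: "lam \<in> lambda_set" and angles: "(\<lambda>g. snd (snd g)) ` L = {of_int k * lam | k. True}"
    by (rule lattice_angle_structure[OF lat uv proj])
  obtain a \<mu> \<nu> where uvab: "zspan u v = zspan a (a * Complex (- \<mu>) \<nu>)"
    and ab: "wedge a (a * Complex (- \<mu>) \<nu>) = 1" and F: "(\<mu>, \<nu>) \<in> Fdom"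
    by (rule reduced_basis_exists[OF uv])
  obtain c where c: "cmod c = 1" and ca: "c * a = complex_of_real (1 / sqrt \<nu>)"
    and cb: "c * (a * Complex (- \<mu>) \<nu>) = Complex (- \<mu> / sqrt \<nu>) (sqrt \<nu>)"
    by (rule rotate_reduced_basis[OF ab Fdom_bounds(1)[OF F]])
  define a' b' L' where "a' = complex_of_real (1 / sqrt \<nu>)"
    and "b' = Complex (- \<mu> / sqrt \<nu>) (sqrt \<nu>)" and "L' = osc_rot c ` L"
  have L': "osc_subgroup L'" unfolding L'_def by (rule osc_subgroup_osc_rot_image[OF c L])
  have proj': "fst ` (L' \<inter> Hset) = zspan a' b'"
    unfolding L'_def a'_def b'_def proj_osc_rot_image proj uvab zspan_mult ca cb ..
  obtain za zb where lifts: "(a', za, 0) \<in> L'" "(b', zb, 0) \<in> L'"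
    using proj_H_lift[of a' L'] proj_H_lift[of b' L'] by (auto simp: proj' zspan_left zspan_right)
  have wedge': "wedge a' b' = 1"
    using wedge_mult_unit[OF c, of a "a * Complex (- \<mu>) \<nu>"] ab by (simp only: a'_def b'_def ca cb)
  have "c \<noteq> 0" using c by auto
  have centre': "(0, z, 0) \<in> L' \<longleftrightarrow> (\<exists>c::int. z = of_int c / real r)" for z
    unfolding L'_def centre_osc_rot_image[OF \<open>c \<noteq> 0\<close>] by (rule centre)
  have frame: "heis_frame L' a' b' za zb r"
    by (rule heis_frame.intro[OF L' r centre' proj' wedge' lifts])
  have "r_of L = r"
    using r_of_osc_rot_image[OF c, of L] heis_frame.r_of_eq[OF frame] by (simp add: L'_def)
  moreover have "lambda_of L = lam" by (rule lambda_of_eqI[OF lam angles])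
  ultimately show ?thesis
    using that[OF c F] frame lam angles unfolding a'_def b'_def L'_def angles_osc_rot_image by simp
qed

theorem lemma4p17:
  fixes L :: "osc set"
  assumes "osc_lattice L" and "normalised L"
  shows "\<exists>S\<in>SO2. \<exists>z\<alpha> z\<beta> \<mu> \<nu>.
    (\<mu>, \<nu>) \<in> Fdom
    \<and> (ord_lam (lambda_of L) = 4 \<longrightarrow> Complex \<mu> \<nu> = \<i>)
    \<and> (ord_lam (lambda_of L) \<in> {3, 6} \<longrightarrow> Complex \<mu> \<nu> = exp (\<i> * of_real (pi / 3)))
    \<and> (let \<alpha> = (complex_of_real (1 / sqrt \<nu>), z\<alpha>, 0);
           \<beta> = (Complex (- \<mu> / sqrt \<nu>) (sqrt \<nu>), z\<beta>, 0);
           \<gamma> = (0, 1 / real (r_of L), 0);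
           L' = F_S S ` L
       in (\<exists>\<delta>. osc_gen {\<alpha>, \<beta>, \<gamma>, \<delta>} = L')
        \<and> (\<forall>\<delta>\<in>L'. snd (snd \<delta>) = lambda_of L \<longrightarrow> adapted L' \<alpha> \<beta> \<gamma> \<delta>))"
proof -
  obtain c \<mu> \<nu> za zb where c: "cmod c = 1" and F: "(\<mu>, \<nu>) \<in> Fdom"
    and frame: "heis_frame (osc_rot c ` L) (complex_of_real (1 / sqrt \<nu>))
      (Complex (- \<mu> / sqrt \<nu>) (sqrt \<nu>)) za zb (r_of L)"
    and lam: "lambda_of L \<in> lambda_set"
    and angles: "(\<lambda>g. snd (snd g)) ` osc_rot c ` L = {of_int k * lambda_of L | k. True}"
    by (rule normalised_lattice_reduced_frame[OF assms])
  note adapted = heis_frame.reduced_frame_adapted[OF frame F refl refl,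
      unfolded lambda_of_osc_rot_image, OF lam angles]
  show ?thesis
    by (rule bexI[OF _ rotm_SO2[OF c]], rule exI[of _ za], rule exI[of _ zb], rule exI[of _ \<mu>],
        rule exI[of _ \<nu>])
      (use F adapted in \<open>unfold Let_def F_S_rotm, blast\<close>)
qed

end
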